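(* Let $\mathfrak g=\mathfrak{gl}(1|2)$, let $\zeta\in\mathcal I$ with $a:=\zeta(E_{23})\neq0$, and let $\lambda\in\mathfrak h^*$ be atypical with $c:=\chi^{\bar0}_\lambda(z)$. Let $\underline\lambda\in W\cdot\lambda$ be antidominant and let $\alpha$ be the unique positive odd root with $(\underline\lambda+\rho,\alpha)=0$ and $\underline\lambda-\alpha$ antidominant. Let $v$ be a nonzero vector of $M(\lambda,\zeta)\subset\widetilde M(\lambda,\zeta)$ with $E_{23}v=av$, and set $v_2:=E_{21}v$, $v_4:=2aE_{31}v+E_{21}H_0v$, and $$w:=v_2+\frac{1}{2(1-c)}v_4\ \text{ if }c\ne1,\qquad w:=v_4\ \text{ if }c=1.$$ Then there is a short exact sequence $0\to U(\mathfrak g)w\to\widetilde M(\lambda,\zeta)\to\widetilde L(\lambda,\zeta)\to0$, where $U(\mathfrak g)w\cong\widetilde L(\underline\lambda-\alpha,\zeta)$ and the quotient $\widetilde M(\lambda,\zeta)/U(\mathfrak g)w\cong\widetilde L(\lambda,\zeta)$ is generated by the image of $v$.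
   Context: $\mathfrak{gl}(1|2)$: $3\times3$ complex matrices, index $1$ even and indices $2,3$ odd, super commutator; $E_{ij}$ matrix units. $\mathfrak g_0=\operatorname{span}\{E_{11},E_{22},E_{23},E_{32},E_{33}\}$, $\mathfrak g_1=\operatorname{span}\{E_{12},E_{13}\}$, $\mathfrak g_{-1}=\operatorname{span}\{E_{21},E_{31}\}$. $\mathfrak h$ = diagonal matrices, dual basis $\varepsilon_i$; $\mathfrak n$ = strictly upper triangular matrices, $\mathfrak n_{\bar0}=\mathbb CE_{23}$; $\mathcal I=\{\zeta\in\mathfrak n^*\mid\zeta(\mathfrak n_{\bar1})=0\}$. Positive odd roots $\varepsilon_1-\varepsilon_2,\varepsilon_1-\varepsilon_3$; $\rho=-\varepsilon_1+\varepsilon_2$, $\rho_{\bar0}=\tfrac12(\varepsilon_2-\varepsilon_3)$. Form: $(\varepsilon_1,\varepsilon_1)=1$, $(\varepsilon_2,\varepsilon_2)=(\varepsilon_3,\varepsilon_3)=-1$, others $0$; $\lambda$ atypical iff $(\lambda+\rho,\beta)=0$ for some odd root $\beta$. $W=\{1,s\}$, $s$ swapping $\varepsilon_2,\varepsilon_3$, dot action $w\cdot\lambda=w(\lambda+\rho_{\bar0})-\rho_{\bar0}$; $\lambda$ antidominant iff $\lambda_2-\lambda_3+1\notin\mathbb Z_{>0}$. $H_0:=E_{22}-E_{33}$, $z:=E_{11}+\tfrac12(E_{22}+E_{33})$; $\chi^{\bar0}_\lambda$ is the central character of $U(\mathfrak g_0)$ of the $\mathfrak g_0$-Verma module of highest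 weight $\lambda$. For each $\mu\in\mathfrak h^*$: $M(\mu,\zeta):=U(\mathfrak g_0)/\operatorname{Ker}(\chi^{\bar0}_\mu)U(\mathfrak g_0)\otimes_{U(\mathbb CE_{23})}\mathbb C_\zeta$, $\widetilde M(\mu,\zeta):=U(\mathfrak g)\otimes_{U(\mathfrak g_0\oplus\mathfrak g_1)}M(\mu,\zeta)$ with $\mathfrak g_1$ acting by zero, and $\widetilde L(\mu,\zeta)$ is its unique simple quotient. *)

theory Defs
  imports Complex_Main "HOL-Library.Function_Algebras"
begin

class cvs = ab_group_add +
  fixes cscale :: "complex \<Rightarrow> 'a \<Rightarrow> 'a" (infixr "*\<^sub>C" 75)
  assumes cscale_add_right: "a *\<^sub>C (x + y) = a *\<^sub>C x + a *\<^sub>C y"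
    and cscale_add_left: "(a + b) *\<^sub>C x = a *\<^sub>C x + b *\<^sub>C x"
    and cscale_cscale: "a *\<^sub>C (b *\<^sub>C x) = (a * b) *\<^sub>C x"
    and cscale_one: "1 *\<^sub>C x = x"

datatype idx = I1 | I2 | I3

fun par :: "idx \<Rightarrow> nat" where
  "par I1 = 0" | "par I2 = 1" | "par I3 = 1"

text \<open>Sign (-1)^(|E_ij| |E_kl|) in the super commutator of matrix units.\<close>
definition ssign :: "idx \<Rightarrow> idx \<Rightarrow> idx \<Rightarrow> idx \<Rightarrow> complex" where
  "ssign i j k l = (-1) ^ ((par i + par j) * (par k + par l))"

text \<open>A (left) U(gl(1|2))-module with carrier a subspace S of a complex vector space:
  act i j is the action of the matrix unit E_ij, and the super commutator relations
  [E_ij,E_kl] = delta_jk E_il - (-1)^(|E_ij||E_kl|) delta_li E_kj hold.\<close>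
definition subspace_c :: "'v::cvs set \<Rightarrow> bool" where
  "subspace_c N \<longleftrightarrow> 0 \<in> N \<and> (\<forall>x\<in>N. \<forall>y\<in>N. x + y \<in> N) \<and> (\<forall>c. \<forall>x\<in>N. c *\<^sub>C x \<in> N)"

definition is_rep :: "'v::cvs set \<Rightarrow> (idx \<Rightarrow> idx \<Rightarrow> 'v \<Rightarrow> 'v) \<Rightarrow> bool" where
  "is_rep S act \<longleftrightarrow> subspace_c S \<and>
     (\<forall>i j. \<forall>x\<in>S. act i j x \<in> S) \<and>
     (\<forall>i j. \<forall>x\<in>S. \<forall>y\<in>S. act i j (x + y) = act i j x + act i j y) \<and>
     (\<forall>i j c. \<forall>x\<in>S. act i j (c *\<^sub>C x) = c *\<^sub>C act i j x) \<and>
     (\<forall>i j k l. \<forall>x\<in>S.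
        act i j (act k l x) - ssign i j k l *\<^sub>C act k l (act i j x) =
        (if j = k then act i l x else 0) - ssign i j k l *\<^sub>C (if l = i then act k j x else 0))"

definition submodule :: "'v::cvs set \<Rightarrow> (idx \<Rightarrow> idx \<Rightarrow> 'v \<Rightarrow> 'v) \<Rightarrow> 'v set \<Rightarrow> bool" where
  "submodule S act N \<longleftrightarrow> N \<subseteq> S \<and> subspace_c N \<and> (\<forall>i j. \<forall>x\<in>N. act i j x \<in> N)"

definition gen :: "'v::cvs set \<Rightarrow> (idx \<Rightarrow> idx \<Rightarrow> 'v \<Rightarrow> 'v) \<Rightarrow> 'v set \<Rightarrow> 'v set" where
  "gen S act X = \<Inter>{N. submodule S act N \<and> X \<subseteq> N}"

definition in_g0 :: "idx \<Rightarrow> idx \<Rightarrow> bool" where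
  "in_g0 i j \<longleftrightarrow> (i = I1 \<and> j = I1) \<or> (i \<noteq> I1 \<and> j \<noteq> I1)"

definition gen0 :: "'v::cvs set \<Rightarrow> (idx \<Rightarrow> idx \<Rightarrow> 'v \<Rightarrow> 'v) \<Rightarrow> 'v set \<Rightarrow> 'v set" where
  "gen0 S act X = \<Inter>{N. N \<subseteq> S \<and> subspace_c N \<and> (\<forall>i j. in_g0 i j \<longrightarrow> (\<forall>x\<in>N. act i j x \<in> N)) \<and> X \<subseteq> N}"

definition simple_mod :: "'v::cvs set \<Rightarrow> (idx \<Rightarrow> idx \<Rightarrow> 'v \<Rightarrow> 'v) \<Rightarrow> 'v set \<Rightarrow> bool" where
  "simple_mod S act N \<longleftrightarrow> submodule S act N \<and> N \<noteq> {0} \<and>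
     (\<forall>N'. submodule S act N' \<and> N' \<subseteq> N \<longrightarrow> N' = {0} \<or> N' = N)"

definition hom :: "'v::cvs set \<Rightarrow> (idx \<Rightarrow> idx \<Rightarrow> 'v \<Rightarrow> 'v) \<Rightarrow> 'w::cvs set \<Rightarrow> (idx \<Rightarrow> idx \<Rightarrow> 'w \<Rightarrow> 'w) \<Rightarrow> ('v \<Rightarrow> 'w) \<Rightarrow> bool" where
  "hom S act S' act' f \<longleftrightarrow> f ` S \<subseteq> S' \<and>
     (\<forall>x\<in>S. \<forall>y\<in>S. f (x + y) = f x + f y) \<and> (\<forall>c. \<forall>x\<in>S. f (c *\<^sub>C x) = c *\<^sub>C f x) \<and>
     (\<forall>i j. \<forall>x\<in>S. f (act i j x) = act' i j (f x))"

text \<open>Weights mu in h^*, written mu = mu(I1) eps_1 + mu(I2) eps_2 + mu(I3) eps_3.\<close>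
type_synonym weight = "idx \<Rightarrow> complex"

definition eps :: "idx \<Rightarrow> weight" where "eps i = (\<lambda>k. if k = i then 1 else 0)"

definition bform :: "weight \<Rightarrow> weight \<Rightarrow> complex" where
  "bform x y = x I1 * y I1 - x I2 * y I2 - x I3 * y I3"

definition rho :: weight where "rho = eps I2 - eps I1"
definition rho0 :: weight where "rho0 = (\<lambda>k. (eps I2 k - eps I3 k) / 2)"

definition odd_roots :: "weight set" where
  "odd_roots = {eps I1 - eps I2, eps I2 - eps I1, eps I1 - eps I3, eps I3 - eps I1}"
definition pos_odd_roots :: "weight set" where
  "pos_odd_roots = {eps I1 - eps I2, eps I1 - eps I3}"

definition atypical :: "weight \<Rightarrow> bool" where
  "atypical lam \<longleftrightarrow> (\<exists>\<beta>\<in>odd_roots. bform (lam + rho) \<beta> = 0)"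

text \<open>The simple reflection s swapping eps_2 and eps_3, and the dot action of W = {1,s}.\<close>
definition srefl :: "weight \<Rightarrow> weight" where
  "srefl x = (\<lambda>k. case k of I1 \<Rightarrow> x I1 | I2 \<Rightarrow> x I3 | I3 \<Rightarrow> x I2)"

definition W_orbit_dot :: "weight \<Rightarrow> weight set" where
  "W_orbit_dot lam = {lam, srefl (lam + rho0) - rho0}"

definition antidominant :: "weight \<Rightarrow> bool" where
  "antidominant lam \<longleftrightarrow> \<not> (\<exists>n::nat. n > 0 \<and> lam I2 - lam I3 + 1 = of_nat n)"

text \<open>chi^0_lam(z) for the central element z = E11 + (E22+E33)/2 of U(g_0): z is central,
  so it acts on the highest weight vector of the g_0-Verma module by lam(z).\<close>
definition chi0_z :: "weight \<Rightarrow> complex" where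
  "chi0_z lam = lam I1 + (lam I2 + lam I3) / 2"

text \<open>zeta \<in> n^*, recorded by its values on the matrix units E_12, E_13, E_23 spanning n;
  zeta \<in> I means zeta vanishes on n_1 = span{E12, E13}.\<close>
definition in_I :: "(idx \<Rightarrow> idx \<Rightarrow> complex) \<Rightarrow> bool" where
  "in_I zeta \<longleftrightarrow> zeta I1 I2 = 0 \<and> zeta I1 I3 = 0"

definition H0 :: "(idx \<Rightarrow> idx \<Rightarrow> 'v \<Rightarrow> 'v) \<Rightarrow> 'v::cvs \<Rightarrow> 'v" where
  "H0 act x = act I2 I2 x - act I3 I3 x"

text \<open>Relations satisfied by the generator 1 \<otimes> 1 of Mtilde(mu,zeta):
  g_1 acts by zero; E_23 acts by zeta(E_23) (the Whittaker condition for n_0 = C E_23);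
  Ker(chi^0_mu) U(g_0) annihilates it. The centre Z(U(g_0)) is the polynomial algebra on
  E11, E22+E33 and the gl(2)-Casimir Omega = H0^2 + 2 E23 E32 + 2 E32 E23, whose values
  under chi^0_mu are mu1, mu2+mu3 and (mu2-mu3)^2 + 2(mu2-mu3).\<close>
definition whitt_gen :: "weight \<Rightarrow> (idx \<Rightarrow> idx \<Rightarrow> complex) \<Rightarrow> (idx \<Rightarrow> idx \<Rightarrow> 'v \<Rightarrow> 'v) \<Rightarrow> 'v::cvs \<Rightarrow> bool" where
  "whitt_gen mu zeta act u \<longleftrightarrow>
     act I1 I2 u = 0 \<and> act I1 I3 u = 0 \<and>
     act I2 I3 u = zeta I2 I3 *\<^sub>C u \<and>
     act I1 I1 u = mu I1 *\<^sub>C u \<and>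
     act I2 I2 u + act I3 I3 u = (mu I2 + mu I3) *\<^sub>C u \<and>
     H0 act (H0 act u) + 2 *\<^sub>C act I2 I3 (act I3 I2 u) + 2 *\<^sub>C act I3 I2 (act I2 I3 u)
       = ((mu I2 - mu I3)^2 + 2 * (mu I2 - mu I3)) *\<^sub>C u"

text \<open>(S, act, v) is (a copy of) the induced module Mtilde(mu,zeta) with v = 1 \<otimes> 1:
  v satisfies the defining relations, generates S, and (S,v) has the universal property
  of the induced module (every module with such a vector receives a homomorphism sending
  v to that vector).\<close>
definition Mtilde_model :: "weight \<Rightarrow> (idx \<Rightarrow> idx \<Rightarrow> complex) \<Rightarrow> 'v::cvs set \<Rightarrow> (idx \<Rightarrow> idx \<Rightarrow> 'v \<Rightarrow> 'v) \<Rightarrow> 'v \<Rightarrow> bool" where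
  "Mtilde_model mu zeta S act v \<longleftrightarrow> is_rep S act \<and> v \<in> S \<and> whitt_gen mu zeta act v \<and>
     gen S act {v} = S \<and>
     (\<forall>(S'::'v set) act' u. is_rep S' act' \<and> u \<in> S' \<and> whitt_gen mu zeta act' u \<longrightarrow>
        (\<exists>f. hom S act S' act' f \<and> f v = u))"

text \<open>The submodule N of (S,act) is isomorphic to Ltilde(mu,zeta), the unique simple quotient
  of Mtilde(mu,zeta): N is simple, it is a quotient (homomorphic image) of every copy of
  Mtilde(mu,zeta), and it contains a nonzero image of the generator.\<close>
definition iso_Ltilde :: "weight \<Rightarrow> (idx \<Rightarrow> idx \<Rightarrow> complex) \<Rightarrow> 'v::cvs set \<Rightarrow> (idx \<Rightarrow> idx \<Rightarrow> 'v \<Rightarrow> 'v) \<Rightarrow> 'v set \<Rightarrow> bool" where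
  "iso_Ltilde mu zeta S act N \<longleftrightarrow> simple_mod S act N \<and>
     (\<exists>u\<in>N. u \<noteq> 0 \<and> whitt_gen mu zeta act u) \<and>
     (\<forall>(S'::'v set) act' v'. Mtilde_model mu zeta S' act' v' \<longrightarrow>
        (\<exists>f. hom S' act' N act f \<and> f ` S' = N))"

text \<open>The quotient S/N is simple (N is a maximal proper submodule).\<close>
definition maximal_submodule :: "'v::cvs set \<Rightarrow> (idx \<Rightarrow> idx \<Rightarrow> 'v \<Rightarrow> 'v) \<Rightarrow> 'v set \<Rightarrow> bool" where
  "maximal_submodule S act N \<longleftrightarrow> submodule S act N \<and> N \<noteq> S \<and>
     (\<forall>N'. submodule S act N' \<and> N \<subseteq> N' \<longrightarrow> N' = N \<or> N' = S)"

end

(*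
  Let v0 generate the induced module. Since E23 v0 = a v0 with a nonzero and [H0, E23] = 2 E23,
  the Whittaker module M(lam, zeta) is free over C[H0] on v0, and every vector of
  Mtilde(lam, zeta) = Lambda(g_-1) (x) M(lam, zeta) is uniquely
  p0(H0) v0 + E21 p2(H0) v0 + E31 p3(H0) v0 + E21 E31 p23(H0) v0.
  The matrix units act on the quadruples (p0, p2, p3, p23) by explicit operators; uniqueness
  of the coordinates comes from the universal property, applied to this explicit model.

  For atypical lam the Casimir value factors as u^2 - 2u with u = 2 - 2 chi(z), and the
  quadruples (0, r(x+1)(x+u), 2a r(x-1), s) form a submodule N containing w. Any submodule
  properly containing N contains v0, and any nonzero submodule of N contains w: since E23 acts
  on coordinates by p(x) \<mapsto> a p(x-2), finite differences lower degrees until a nonzero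
  constant is reached. The vector w has the weights of lamu - alpha.
*)

theory Submission
  imports Defs "HOL-Computational_Algebra.Polynomial" "HOL-Library.Product_Plus"
begin

context cvs begin

lemma cscale_zero_left [simp]: "0 *\<^sub>C x = 0"
  using cscale_add_left[of 0 0 x] by simp

lemma cscale_zero_right [simp]: "c *\<^sub>C 0 = 0"
  using cscale_add_right[of c 0 0] by simp

lemma cscale_minus_right: "c *\<^sub>C (- x) = - (c *\<^sub>C x)"
proof -
  have "c *\<^sub>C (- x) + c *\<^sub>C x = 0"
    using cscale_add_right[of c "- x" x] by simp
  then show ?thesis by (simp add: add_eq_0_iff2)
qed

lemma cscale_diff_right: "c *\<^sub>C (x - y) = c *\<^sub>C x - c *\<^sub>C y"
  by (simp only: diff_conv_add_uminus cscale_add_right cscale_minus_right)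

lemma cscale_minus_left: "(- c) *\<^sub>C x = - (c *\<^sub>C x)"
proof -
  have "(- c) *\<^sub>C x + c *\<^sub>C x = 0"
    using cscale_add_left[of "- c" c x] by simp
  then show ?thesis by (simp add: add_eq_0_iff2)
qed

lemma cscale_diff_left: "(c - d) *\<^sub>C x = c *\<^sub>C x - d *\<^sub>C x"
  using cscale_add_left[of c "- d" x] by (simp add: cscale_minus_left)

lemma cscale_minus_one [simp]: "(- 1) *\<^sub>C x = - x"
  by (simp add: cscale_minus_left cscale_one)

lemma cscale_two: "2 *\<^sub>C x = x + x"
  using cscale_add_left[of 1 1 x] by (simp add: cscale_one)

lemma cscale_eq_0_iff: "c *\<^sub>C x = 0 \<longleftrightarrow> c = 0 \<or> x = 0"
proof
  assume cx: "c *\<^sub>C x = 0"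
  have "c \<noteq> 0 \<Longrightarrow> x = (1 / c) *\<^sub>C (c *\<^sub>C x)"
    by (simp add: cscale_cscale cscale_one)
  then show "c = 0 \<or> x = 0" using cx by auto
qed auto

lemma cscale_cancel_left: "c \<noteq> 0 \<Longrightarrow> c *\<^sub>C x = c *\<^sub>C y \<longleftrightarrow> x = y"
  using cscale_eq_0_iff[of c "x - y"] by (auto simp: cscale_diff_right)

lemma neg_eq_self_iff: "x = - x \<longleftrightarrow> x = 0"
  using cscale_eq_0_iff[of 2 x] by (auto simp: cscale_two eq_neg_iff_add_eq_0)

end

section \<open>Finite differences of polynomials\<close>

lemma poly_eq_pointwise_iff: "p = q \<longleftrightarrow> (\<forall>x. poly p x = poly (q :: 'a::{idom,ring_char_0} poly) x)"
  by (simp flip: poly_eq_poly_eq_iff add: fun_eq_iff)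

lemma shift_invariant_poly_const:
  fixes p :: "'a::{idom,ring_char_0} poly"
  assumes "c \<noteq> 0" and invariant: "pcompose p [:c, 1:] = p"
  shows "p = [:poly p 0:]"
proof -
  have periodic: "poly p (c + x) = poly p x" for x
    using arg_cong[OF invariant, of "\<lambda>q. poly q x"] by (simp add: poly_pcompose algebra_simps)
  have "poly p (of_nat n * c) = poly p 0" for n
    by (induction n) (simp_all add: distrib_right periodic)
  then have "range (\<lambda>n. of_nat n * c) \<subseteq> {x. poly (p - [:poly p 0:]) x = 0}"
    by auto
  moreover have "infinite (range (\<lambda>n::nat. of_nat n * c))"
    using \<open>c \<noteq> 0\<close> by (intro range_inj_infinite) (simp add: inj_on_def)
  ultimately show ?thesis
    using poly_roots_finite[of "p - [:poly p 0:]"] finite_subset by auto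
qed

lemma degree_shift_diff_less:
  fixes p :: "'a::idom poly"
  assumes "degree p > 0"
  shows "degree (pcompose p [:c, 1:] - p) < degree p"
proof -
  let ?d = "pcompose p [:c, 1:] - p"
  have "degree ?d \<le> degree p"
    using degree_diff_le[of "pcompose p [:c, 1:]" "degree p" p] by (simp add: degree_pcompose)
  moreover have "coeff ?d (degree p) = 0"
    using lead_coeff_comp[of "[:c, 1:]" p] by (simp add: degree_pcompose)
  ultimately show ?thesis
    using assms leading_coeff_0_iff[of ?d] by (cases "degree ?d = degree p") auto
qed

lemma shift_invariant_subspace_contains_one:
  fixes K :: "'a::{field,ring_char_0} poly set"
  assumes smult: "\<And>d q. q \<in> K \<Longrightarrow> smult d q \<in> K"
    and diff: "\<And>q r. q \<in> K \<Longrightarrow> r \<in> K \<Longrightarrow> q - r \<in> K"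
    and shift: "\<And>q. q \<in> K \<Longrightarrow> pcompose q [:c, 1:] \<in> K"
    and "c \<noteq> 0" "p \<in> K" "p \<noteq> 0"
  shows "1 \<in> K"
  using \<open>p \<in> K\<close> \<open>p \<noteq> 0\<close>
proof (induction "degree p" arbitrary: p rule: less_induct)
  case less
  show ?case
  proof (cases "degree p = 0")
    case True
    then have "p = [:coeff p 0:]" and "coeff p 0 \<noteq> 0"
      using less.prems(2) by (auto elim: degree_eq_zeroE)
    then have "smult (1 / coeff p 0) p = 1"
      by (metis one_pCons smult_pCons smult_0_right divide_self_if times_divide_eq_left mult_1)
    then show ?thesis
      using smult[OF less.prems(1)] by metis
  next
    case False
    let ?d = "pcompose p [:c, 1:] - p"
    have "?d \<noteq> 0"
      using False shift_invariant_poly_const[OF \<open>c \<noteq> 0\<close>, of p] by (metis degree_pCons_0 eq_iff_diff_eq_0)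
    moreover have "?d \<in> K" using less.prems(1) by (intro diff shift)
    ultimately show ?thesis
      using less.hyps degree_shift_diff_less False by blast
  qed
qed

section \<open>Modules over gl(1|2)\<close>

definition H0_poly :: "(idx \<Rightarrow> idx \<Rightarrow> 'v \<Rightarrow> 'v) \<Rightarrow> complex poly \<Rightarrow> 'v::cvs \<Rightarrow> 'v" where
  "H0_poly act p x = foldr (\<lambda>c z. c *\<^sub>C x + H0 act z) (coeffs p) 0"

lemma H0_poly_0 [simp]: "H0_poly act 0 x = 0"
  by (simp add: H0_poly_def)

locale rep =
  fixes S :: "'v::cvs set" and act :: "idx \<Rightarrow> idx \<Rightarrow> 'v \<Rightarrow> 'v"
  assumes is_rep: "is_rep S act"
begin

lemma zero_in [simp]: "0 \<in> S"
  and add_in [simp]: "x \<in> S \<Longrightarrow> y \<in> S \<Longrightarrow> x + y \<in> S"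
  and cscale_in [simp]: "x \<in> S \<Longrightarrow> c *\<^sub>C x \<in> S"
  and act_in [simp]: "x \<in> S \<Longrightarrow> act i j x \<in> S"
  and act_add [simp]: "x \<in> S \<Longrightarrow> y \<in> S \<Longrightarrow> act i j (x + y) = act i j x + act i j y"
  and act_cscale [simp]: "x \<in> S \<Longrightarrow> act i j (c *\<^sub>C x) = c *\<^sub>C act i j x"
  using is_rep by (simp_all add: is_rep_def subspace_c_def)

lemma uminus_in [simp]: "x \<in> S \<Longrightarrow> - x \<in> S"
  using cscale_in[of x "- 1"] by simp

lemma diff_in [simp]: "x \<in> S \<Longrightarrow> y \<in> S \<Longrightarrow> x - y \<in> S"
  using add_in[of x "- y"] by simp

lemma act_zero [simp]: "act i j 0 = 0"
  using act_add[of 0 0 i j] by simp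

lemma act_uminus [simp]: "x \<in> S \<Longrightarrow> act i j (- x) = - act i j x"
  using act_cscale[of x i j "- 1"] by simp

lemma act_diff [simp]: "x \<in> S \<Longrightarrow> y \<in> S \<Longrightarrow> act i j (x - y) = act i j x - act i j y"
  using act_add[of x "- y" i j] by simp

lemma act_bracket:
  "x \<in> S \<Longrightarrow> act i j (act k l x) - ssign i j k l *\<^sub>C act k l (act i j x) =
     (if j = k then act i l x else 0) - ssign i j k l *\<^sub>C (if l = i then act k j x else 0)"
  using is_rep by (simp add: is_rep_def)

lemma comm_even:
  "ssign i j k l = 1 \<Longrightarrow> x \<in> S \<Longrightarrow> act i j (act k l x) =
     act k l (act i j x) + ((if j = k then act i l x else 0) - (if l = i then act k j x else 0))"
proof -
  assume "ssign i j k l = 1" "x \<in> S"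
  then have "act i j (act k l x) - act k l (act i j x) =
      (if j = k then act i l x else 0) - (if l = i then act k j x else 0)"
    using act_bracket[of x i j k l] by (simp only: cscale_one)
  then show ?thesis by (metis add.commute diff_add_cancel)
qed

lemma comm_odd:
  "ssign i j k l = - 1 \<Longrightarrow> x \<in> S \<Longrightarrow> act i j (act k l x) =
     - act k l (act i j x) + ((if j = k then act i l x else 0) + (if l = i then act k j x else 0))"
  using act_bracket[of x i j k l] by (simp add: eq_diff_eq add.commute)

lemma H0_in [simp]: "x \<in> S \<Longrightarrow> H0 act x \<in> S"
  and H0_add [simp]: "x \<in> S \<Longrightarrow> y \<in> S \<Longrightarrow> H0 act (x + y) = H0 act x + H0 act y"
  and H0_cscale [simp]: "x \<in> S \<Longrightarrow> H0 act (c *\<^sub>C x) = c *\<^sub>C H0 act x"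
  and H0_zero [simp]: "H0 act 0 = 0"
  and H0_uminus [simp]: "x \<in> S \<Longrightarrow> H0 act (- x) = - H0 act x"
  and H0_diff [simp]: "x \<in> S \<Longrightarrow> y \<in> S \<Longrightarrow> H0 act (x - y) = H0 act x - H0 act y"
  by (simp_all add: H0_def cscale_diff_right algebra_simps)

lemma comm_21_21 [simp]: "x \<in> S \<Longrightarrow> act I2 I1 (act I2 I1 x) = 0"
  using comm_odd[of I2 I1 I2 I1 x] by (simp add: ssign_def neg_eq_self_iff)
lemma comm_31_31 [simp]: "x \<in> S \<Longrightarrow> act I3 I1 (act I3 I1 x) = 0"
  using comm_odd[of I3 I1 I3 I1 x] by (simp add: ssign_def neg_eq_self_iff)
lemma comm_31_21 [simp]: "x \<in> S \<Longrightarrow> act I3 I1 (act I2 I1 x) = - act I2 I1 (act I3 I1 x)"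
  using comm_odd[of I3 I1 I2 I1 x] by (simp add: ssign_def)

lemma comm_11_21 [simp]: "x \<in> S \<Longrightarrow> act I1 I1 (act I2 I1 x) = act I2 I1 (act I1 I1 x) - act I2 I1 x"
  using comm_even[of I1 I1 I2 I1 x] by (simp add: ssign_def)
lemma comm_22_21 [simp]: "x \<in> S \<Longrightarrow> act I2 I2 (act I2 I1 x) = act I2 I1 (act I2 I2 x) + act I2 I1 x"
  using comm_even[of I2 I2 I2 I1 x] by (simp add: ssign_def)
lemma comm_33_21 [simp]: "x \<in> S \<Longrightarrow> act I3 I3 (act I2 I1 x) = act I2 I1 (act I3 I3 x)"
  using comm_even[of I3 I3 I2 I1 x] by (simp add: ssign_def)
lemma comm_23_21 [simp]: "x \<in> S \<Longrightarrow> act I2 I3 (act I2 I1 x) = act I2 I1 (act I2 I3 x)"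
  using comm_even[of I2 I3 I2 I1 x] by (simp add: ssign_def)
lemma comm_32_21 [simp]: "x \<in> S \<Longrightarrow> act I3 I2 (act I2 I1 x) = act I2 I1 (act I3 I2 x) + act I3 I1 x"
  using comm_even[of I3 I2 I2 I1 x] by (simp add: ssign_def)

lemma comm_11_31 [simp]: "x \<in> S \<Longrightarrow> act I1 I1 (act I3 I1 x) = act I3 I1 (act I1 I1 x) - act I3 I1 x"
  using comm_even[of I1 I1 I3 I1 x] by (simp add: ssign_def)
lemma comm_22_31 [simp]: "x \<in> S \<Longrightarrow> act I2 I2 (act I3 I1 x) = act I3 I1 (act I2 I2 x)"
  using comm_even[of I2 I2 I3 I1 x] by (simp add: ssign_def)
lemma comm_33_31 [simp]: "x \<in> S \<Longrightarrow> act I3 I3 (act I3 I1 x) = act I3 I1 (act I3 I3 x) + act I3 I1 x"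
  using comm_even[of I3 I3 I3 I1 x] by (simp add: ssign_def)
lemma comm_23_31 [simp]: "x \<in> S \<Longrightarrow> act I2 I3 (act I3 I1 x) = act I3 I1 (act I2 I3 x) + act I2 I1 x"
  using comm_even[of I2 I3 I3 I1 x] by (simp add: ssign_def)
lemma comm_32_31 [simp]: "x \<in> S \<Longrightarrow> act I3 I2 (act I3 I1 x) = act I3 I1 (act I3 I2 x)"
  using comm_even[of I3 I2 I3 I1 x] by (simp add: ssign_def)

lemma comm_12_21 [simp]:
  "x \<in> S \<Longrightarrow> act I1 I2 (act I2 I1 x) = - act I2 I1 (act I1 I2 x) + (act I1 I1 x + act I2 I2 x)"
  using comm_odd[of I1 I2 I2 I1 x] by (simp add: ssign_def)
lemma comm_12_31 [simp]:
  "x \<in> S \<Longrightarrow> act I1 I2 (act I3 I1 x) = - act I3 I1 (act I1 I2 x) + act I3 I2 x"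
  using comm_odd[of I1 I2 I3 I1 x] by (simp add: ssign_def)
lemma comm_13_21 [simp]:
  "x \<in> S \<Longrightarrow> act I1 I3 (act I2 I1 x) = - act I2 I1 (act I1 I3 x) + act I2 I3 x"
  using comm_odd[of I1 I3 I2 I1 x] by (simp add: ssign_def)
lemma comm_13_31 [simp]:
  "x \<in> S \<Longrightarrow> act I1 I3 (act I3 I1 x) = - act I3 I1 (act I1 I3 x) + (act I1 I1 x + act I3 I3 x)"
  using comm_odd[of I1 I3 I3 I1 x] by (simp add: ssign_def)

text \<open>The eigenvalues of ad H0, written as explicit coefficients to match H0_poly_comm.\<close>
lemma H0_comm_11: "y \<in> S \<Longrightarrow> H0 act (act I1 I1 y) = act I1 I1 (H0 act y) + 0 *\<^sub>C act I1 I1 y"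
  using comm_even[of I2 I2 I1 I1 y] comm_even[of I3 I3 I1 I1 y] by (simp add: H0_def ssign_def)
lemma H0_comm_23: "y \<in> S \<Longrightarrow> H0 act (act I2 I3 y) = act I2 I3 (H0 act y) + 2 *\<^sub>C act I2 I3 y"
  using comm_even[of I2 I2 I2 I3 y] comm_even[of I3 I3 I2 I3 y]
  by (simp add: H0_def ssign_def cscale_two algebra_simps)
lemma H0_comm_32: "y \<in> S \<Longrightarrow> H0 act (act I3 I2 y) = act I3 I2 (H0 act y) + (- 2) *\<^sub>C act I3 I2 y"
  using comm_even[of I2 I2 I3 I2 y] comm_even[of I3 I3 I3 I2 y]
  by (simp add: H0_def ssign_def cscale_minus_left cscale_two algebra_simps)
lemma H0_comm_12: "y \<in> S \<Longrightarrow> H0 act (act I1 I2 y) = act I1 I2 (H0 act y) + (- 1) *\<^sub>C act I1 I2 y"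
  using comm_even[of I2 I2 I1 I2 y] comm_even[of I3 I3 I1 I2 y]
  by (simp add: H0_def ssign_def algebra_simps)
lemma H0_comm_13: "y \<in> S \<Longrightarrow> H0 act (act I1 I3 y) = act I1 I3 (H0 act y) + 1 *\<^sub>C act I1 I3 y"
  using comm_even[of I2 I2 I1 I3 y] comm_even[of I3 I3 I1 I3 y]
  by (simp add: H0_def ssign_def cscale_one algebra_simps)
lemma H0_comm_Z:
  "y \<in> S \<Longrightarrow> H0 act (act I2 I2 y + act I3 I3 y) =
     (act I2 I2 (H0 act y) + act I3 I3 (H0 act y)) + 0 *\<^sub>C (act I2 I2 y + act I3 I3 y)"
  using comm_even[of I2 I2 I3 I3 y] by (simp add: H0_def ssign_def algebra_simps)

lemma H0_poly_pCons: "x \<in> S \<Longrightarrow> H0_poly act (pCons c p) x = c *\<^sub>C x + H0 act (H0_poly act p x)"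
  by (cases "p = 0 \<and> c = 0") (auto simp: H0_poly_def cCons_def)

lemma H0_poly_in [simp]: "x \<in> S \<Longrightarrow> H0_poly act p x \<in> S"
  by (induction p) (simp_all add: H0_poly_pCons)

lemma H0_poly_zero [simp]: "H0_poly act p 0 = 0"
  by (induction p) (simp_all add: H0_poly_pCons)

lemma H0_poly_cscale: "x \<in> S \<Longrightarrow> H0_poly act p (c *\<^sub>C x) = c *\<^sub>C H0_poly act p x"
  by (induction p) (simp_all add: H0_poly_pCons cscale_add_right cscale_cscale mult.commute)

lemma H0_poly_add [simp]: "x \<in> S \<Longrightarrow> H0_poly act (p + q) x = H0_poly act p x + H0_poly act q x"
proof (induction p arbitrary: q)
  case (pCons c p)
  then show ?case
    by (cases q) (simp add: H0_poly_pCons cscale_add_left add_ac)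
qed simp

lemma H0_poly_smult [simp]: "x \<in> S \<Longrightarrow> H0_poly act (smult c p) x = c *\<^sub>C H0_poly act p x"
  by (induction p) (simp_all add: H0_poly_pCons cscale_add_right cscale_cscale)

lemma H0_poly_uminus [simp]: "x \<in> S \<Longrightarrow> H0_poly act (- p) x = - H0_poly act p x"
  using H0_poly_smult[of x "- 1" p] by simp

lemma H0_poly_diff [simp]: "x \<in> S \<Longrightarrow> H0_poly act (p - q) x = H0_poly act p x - H0_poly act q x"
  using H0_poly_add[of x p "- q"] by simp

lemma H0_poly_const [simp]: "x \<in> S \<Longrightarrow> H0_poly act [:c:] x = c *\<^sub>C x"
  by (simp add: H0_poly_pCons)

lemma H0_poly_one [simp]: "x \<in> S \<Longrightarrow> H0_poly act 1 x = x"
  by (simp add: one_pCons H0_poly_pCons cscale_one)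

lemma H0_poly_mult: "x \<in> S \<Longrightarrow> H0_poly act (p * q) x = H0_poly act p (H0_poly act q x)"
  by (induction p) (simp_all add: H0_poly_pCons)

lemma H0_poly_comm:
  assumes X_in: "\<And>y. y \<in> S \<Longrightarrow> X y \<in> S"
    and X_add: "\<And>y z. y \<in> S \<Longrightarrow> z \<in> S \<Longrightarrow> X (y + z) = X y + X z"
    and X_cscale: "\<And>y c. y \<in> S \<Longrightarrow> X (c *\<^sub>C y) = c *\<^sub>C X y"
    and X_H0: "\<And>y. y \<in> S \<Longrightarrow> H0 act (X y) = X (H0 act y) + d *\<^sub>C X y"
    and "y \<in> S"
  shows "X (H0_poly act q y) = H0_poly act (pcompose q [:- d, 1:]) (X y)"
proof (induction q)
  case 0
  show ?case using X_add[of 0 0] by simp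
next
  case (pCons c q)
  let ?z = "H0_poly act q y"
  have z: "?z \<in> S" using \<open>y \<in> S\<close> by simp
  have "X (H0_poly act (pCons c q) y) = c *\<^sub>C X y + X (H0 act ?z)"
    using \<open>y \<in> S\<close> z by (simp add: H0_poly_pCons X_add X_cscale)
  also have "\<dots> = c *\<^sub>C X y + H0 act (X ?z) - d *\<^sub>C X ?z"
    using X_H0[OF z] by (simp add: algebra_simps)
  also have "\<dots> = H0_poly act (pcompose (pCons c q) [:- d, 1:]) (X y)"
    using \<open>y \<in> S\<close> X_in pCons
    by (simp add: pcompose_pCons H0_poly_pCons cscale_minus_left algebra_simps)
  finally show ?case .
qed

lemma H0_poly_act:
  assumes "\<And>y. y \<in> S \<Longrightarrow> H0 act (act i j y) = act i j (H0 act y) + d *\<^sub>C act i j y" "y \<in> S"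
  shows "act i j (H0_poly act q y) = H0_poly act (pcompose q [:- d, 1:]) (act i j y)"
  by (rule H0_poly_comm) (use assms in auto)

lemma submodule_carrier: "submodule S act S"
  using is_rep by (simp add: submodule_def is_rep_def)

lemma submodule_is_rep: "submodule S act N \<Longrightarrow> is_rep N act"
  using is_rep unfolding is_rep_def submodule_def by blast

lemma gen_least: "submodule S act N \<Longrightarrow> X \<subseteq> N \<Longrightarrow> gen S act X \<subseteq> N"
  unfolding gen_def by blast

lemma gen_superset: "X \<subseteq> gen S act X"
  unfolding gen_def by blast

lemma submodule_gen:
  assumes "X \<subseteq> S"
  shows "submodule S act (gen S act X)"
  unfolding submodule_def subspace_c_def
proof (intro conjI ballI allI)
  show "gen S act X \<subseteq> S" by (rule gen_least[OF submodule_carrier assms])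
  show "0 \<in> gen S act X" unfolding gen_def by (auto simp: submodule_def subspace_c_def)
next
  fix x y assume "x \<in> gen S act X" "y \<in> gen S act X"
  then show "x + y \<in> gen S act X" unfolding gen_def by (auto simp: submodule_def subspace_c_def)
next
  fix c x assume "x \<in> gen S act X"
  then show "c *\<^sub>C x \<in> gen S act X" unfolding gen_def by (auto simp: submodule_def subspace_c_def)
next
  fix i j x assume "x \<in> gen S act X"
  then show "act i j x \<in> gen S act X" unfolding gen_def by (auto simp: submodule_def)
qed

lemma submodule_hom_image:
  assumes rep': "is_rep S' act'" and f: "hom S' act' S act f"
  shows "submodule S act (f ` S')"
  unfolding submodule_def subspace_c_def
proof (intro conjI ballI allI)
  have "0 \<in> S'" using rep' by (simp add: is_rep_def subspace_c_def)
  moreover have "f 0 = 0"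
    using f \<open>0 \<in> S'\<close> add_0_right[of 0] unfolding hom_def by (metis add_cancel_right_right)
  ultimately show "0 \<in> f ` S'" by (metis image_eqI)
  show "f ` S' \<subseteq> S" using f by (simp add: hom_def)
next
  fix x y assume "x \<in> f ` S'" "y \<in> f ` S'"
  then obtain x' y' where "x' \<in> S'" "y' \<in> S'" "x = f x'" "y = f y'" by blast
  moreover from this have "x + y = f (x' + y')" and "x' + y' \<in> S'"
    using f rep' by (simp_all add: hom_def is_rep_def subspace_c_def)
  ultimately show "x + y \<in> f ` S'" by blast
next
  fix c x assume "x \<in> f ` S'"
  then obtain x' where "x' \<in> S'" "x = f x'" by blast
  moreover from this have "c *\<^sub>C x = f (c *\<^sub>C x')" and "c *\<^sub>C x' \<in> S'"
    using f rep' by (simp_all add: hom_def is_rep_def subspace_c_def)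
  ultimately show "c *\<^sub>C x \<in> f ` S'" by blast
next
  fix i j x assume "x \<in> f ` S'"
  then obtain x' where "x' \<in> S'" "x = f x'" by blast
  moreover from this have "act i j x = f (act' i j x')" and "act' i j x' \<in> S'"
    using f rep' by (simp_all add: hom_def is_rep_def)
  ultimately show "act i j x \<in> f ` S'" by blast
qed

lemma iso_LtildeI:
  assumes simple: "simple_mod S act N" and "u \<in> N" "u \<noteq> 0" and whitt: "whitt_gen mu zeta act u"
  shows "iso_Ltilde mu zeta S act N"
proof -
  have N: "submodule S act N"
    and N_simple: "\<And>N'. submodule S act N' \<Longrightarrow> N' \<subseteq> N \<Longrightarrow> N' = {0} \<or> N' = N"
    using simple by (simp_all add: simple_mod_def)
  have "\<exists>f. hom S' act' N act f \<and> f ` S' = N" if M: "Mtilde_model mu zeta S' act' v'" for S' :: "'v set" and act' v'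
  proof -
    have rep': "is_rep S' act'" and "v' \<in> S'"
      and univ: "\<forall>(S''::'v set) act'' u. is_rep S'' act'' \<and> u \<in> S'' \<and> whitt_gen mu zeta act'' u \<longrightarrow>
                   (\<exists>f. hom S' act' S'' act'' f \<and> f v' = u)"
      using M by (simp_all add: Mtilde_model_def)
    obtain f where f: "hom S' act' N act f" "f v' = u"
      using univ submodule_is_rep[OF N] \<open>u \<in> N\<close> whitt by blast
    then have "hom S' act' S act f"
      using N by (auto simp: hom_def submodule_def)
    then have "submodule S act (f ` S')" by (rule submodule_hom_image[OF rep'])
    moreover have "f ` S' \<subseteq> N" "u \<in> f ` S'"
      using f \<open>v' \<in> S'\<close> by (auto simp: hom_def)
    ultimately have "f ` S' = N"
      using N_simple \<open>u \<noteq> 0\<close> by blast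
    with f show ?thesis by blast
  qed
  then show ?thesis
    using assms by (auto simp: iso_Ltilde_def)
qed

end

section \<open>Coordinates on the induced module\<close>

type_synonym quad = "complex poly \<times> complex poly \<times> complex poly \<times> complex poly"

fun quad_scale :: "complex \<Rightarrow> quad \<Rightarrow> quad" where
  "quad_scale c (p0, p2, p3, p23) = (smult c p0, smult c p2, smult c p3, smult c p23)"

lemma quad_scale_add: "quad_scale c (P + Q) = quad_scale c P + quad_scale c Q"
  by (cases P; cases Q) (simp add: smult_add_right)

lemma quad_scale_scale: "quad_scale c (quad_scale d P) = quad_scale (c * d) P"
  by (cases P) simp

lemma quad_scale_one [simp]: "quad_scale 1 P = P"
  by (cases P) simp

lemma quad_scale_zero [simp]: "quad_scale c 0 = 0"
  by (simp add: zero_prod_def)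

lemma quad_scale_minus_one: "quad_scale (- 1) P = - P"
  by (cases P) simp

text \<open>E22, E33, E23, E32 acting on p(H0) v, where E23 v = a v, (E22 + E33) v = s v and the
  gl(2)-Casimir acts on v by k; the Casimir relation forces E32 v = (k - 2 H0 - H0^2) v / (4 a).\<close>
definition op22 :: "complex \<Rightarrow> complex poly \<Rightarrow> complex poly" where
  "op22 s p = [:s/2, 1/2:] * p"
definition op33 :: "complex \<Rightarrow> complex poly \<Rightarrow> complex poly" where
  "op33 s p = [:s/2, -1/2:] * p"
definition op23 :: "complex \<Rightarrow> complex poly \<Rightarrow> complex poly" where
  "op23 a p = smult a (pcompose p [:-2, 1:])"
definition op32 :: "complex \<Rightarrow> complex \<Rightarrow> complex poly \<Rightarrow> complex poly" where
  "op32 k a p = pcompose p [:2, 1:] * smult (1/(4*a)) [:k, -2, -1:]"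

lemmas op_defs = op22_def op33_def op23_def op32_def

text \<open>The quadruple (p0, p2, p3, p23) stands for p0(H0) v + E21 p2(H0) v + E31 p3(H0) v +
  E21 E31 p23(H0) v, where v additionally satisfies E11 v = l v and E12 v = E13 v = 0;
  quad_act l s k a i j is the action of E_ij in these coordinates.\<close>
fun quad_act :: "complex \<Rightarrow> complex \<Rightarrow> complex \<Rightarrow> complex \<Rightarrow> idx \<Rightarrow> idx \<Rightarrow> quad \<Rightarrow> quad" where
  "quad_act l s k a I1 I1 (p0, p2, p3, p23) =
     (smult l p0, smult (l - 1) p2, smult (l - 1) p3, smult (l - 2) p23)"
| "quad_act l s k a I2 I2 (p0, p2, p3, p23) = (op22 s p0, op22 s p2 + p2, op22 s p3, op22 s p23 + p23)"
| "quad_act l s k a I3 I3 (p0, p2, p3, p23) = (op33 s p0, op33 s p2, op33 s p3 + p3, op33 s p23 + p23)"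
| "quad_act l s k a I2 I3 (p0, p2, p3, p23) = (op23 a p0, op23 a p2 + p3, op23 a p3, op23 a p23)"
| "quad_act l s k a I3 I2 (p0, p2, p3, p23) =
     (op32 k a p0, op32 k a p2, op32 k a p3 + p2, op32 k a p23)"
| "quad_act l s k a I2 I1 (p0, p2, p3, p23) = (0, p0, 0, p3)"
| "quad_act l s k a I3 I1 (p0, p2, p3, p23) = (0, 0, p0, - p2)"
| "quad_act l s k a I1 I2 (p0, p2, p3, p23) =
     (smult l p2 + op22 s p2 + op32 k a p3, - op32 k a p23, smult l p23 + op22 s p23 - p23, 0)"
| "quad_act l s k a I1 I3 (p0, p2, p3, p23) =
     (op23 a p2 + smult l p3 + op33 s p3, p23 - smult l p23 - op33 s p23, op23 a p23, 0)"

lemma quad_act_add: "quad_act l s k a i j (P + Q) = quad_act l s k a i j P + quad_act l s k a i j Q"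
  by (cases P; cases Q; cases i; cases j) (auto simp: op_defs poly_eq_pointwise_iff poly_pcompose algebra_simps)

lemma quad_act_scale: "quad_act l s k a i j (quad_scale c P) = quad_scale c (quad_act l s k a i j P)"
  by (cases P; cases i; cases j) (auto simp: op_defs poly_eq_pointwise_iff poly_pcompose algebra_simps)

lemma quad_act_bracket:
  assumes "a \<noteq> 0"
  shows "quad_act l s k a i j (quad_act l s k a m n P)
           - quad_scale (ssign i j m n) (quad_act l s k a m n (quad_act l s k a i j P)) =
         (if j = m then quad_act l s k a i n P else 0)
           - quad_scale (ssign i j m n) (if n = i then quad_act l s k a m j P else 0)"
  using assms
  by (cases P; cases i; cases j; cases m; cases n)
     (simp_all add: ssign_def op_defs poly_eq_pointwise_iff poly_pcompose zero_prod_def field_simps)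

locale whittaker_vector = rep S act for S :: "'v::cvs set" and act +
  fixes v0 :: 'v and lam :: weight and zeta :: "idx \<Rightarrow> idx \<Rightarrow> complex"
  assumes v0_in [simp]: "v0 \<in> S" and whitt: "whitt_gen lam zeta act v0"
    and a_nz: "zeta I2 I3 \<noteq> 0"
begin

abbreviation "aa \<equiv> zeta I2 I3"
abbreviation "l1 \<equiv> lam I1"
abbreviation "ss \<equiv> lam I2 + lam I3"
definition casimir where "casimir = (lam I2 - lam I3)^2 + 2 * (lam I2 - lam I3)"
abbreviation "qact \<equiv> quad_act l1 ss casimir aa"
abbreviation "pv p \<equiv> H0_poly act p v0"

lemma v0_12 [simp]: "act I1 I2 v0 = 0"
  and v0_13 [simp]: "act I1 I3 v0 = 0"
  and v0_23 [simp]: "act I2 I3 v0 = aa *\<^sub>C v0"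
  and v0_11 [simp]: "act I1 I1 v0 = l1 *\<^sub>C v0"
  and v0_Z: "act I2 I2 v0 + act I3 I3 v0 = ss *\<^sub>C v0"
  and v0_casimir: "H0 act (H0 act v0) + 2 *\<^sub>C act I2 I3 (act I3 I2 v0) + 2 *\<^sub>C act I3 I2 (act I2 I3 v0)
    = casimir *\<^sub>C v0"
  using whitt unfolding whitt_gen_def casimir_def by blast+

lemma pv_11 [simp]: "act I1 I1 (pv p) = l1 *\<^sub>C pv p"
  using H0_poly_act[OF H0_comm_11, of v0 p] by (simp add: H0_poly_cscale)

lemma pv_12 [simp]: "act I1 I2 (pv p) = 0"
  using H0_poly_act[OF H0_comm_12, of v0 p] by simp

lemma pv_13 [simp]: "act I1 I3 (pv p) = 0"
  using H0_poly_act[OF H0_comm_13, of v0 p] by simp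

lemma pv_23 [simp]: "act I2 I3 (pv p) = pv (op23 aa p)"
  using H0_poly_act[OF H0_comm_23, of v0 p] by (simp add: H0_poly_cscale op23_def)

lemma pv_Z: "act I2 I2 (pv p) + act I3 I3 (pv p) = ss *\<^sub>C pv p"
proof -
  have "act I2 I2 (pv p) + act I3 I3 (pv p) =
      H0_poly act (pcompose p [:- 0, 1:]) (act I2 I2 v0 + act I3 I3 v0)"
    by (rule H0_poly_comm[where X="\<lambda>y. act I2 I2 y + act I3 I3 y", OF _ _ _ H0_comm_Z])
      (auto simp: cscale_add_right)
  then show ?thesis by (simp add: v0_Z H0_poly_cscale)
qed

lemma H0_pv: "H0 act (pv p) = pv (pCons 0 p)"
  by (simp add: H0_poly_pCons)

lemma pv_22 [simp]: "act I2 I2 (pv p) = pv (op22 ss p)"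
proof -
  have "2 *\<^sub>C act I2 I2 (pv p) = H0 act (pv p) + (act I2 I2 (pv p) + act I3 I3 (pv p))"
    by (simp add: H0_def cscale_two)
  also have "\<dots> = pv (pCons 0 p) + ss *\<^sub>C pv p"
    by (simp only: H0_pv pv_Z)
  also have "\<dots> = pv (pCons 0 p + smult ss p)"
    by simp
  also have "pCons 0 p + smult ss p = smult 2 (op22 ss p)"
    by (simp add: op22_def poly_eq_pointwise_iff algebra_simps)
  finally show ?thesis by (simp add: cscale_cancel_left)
qed

lemma pv_33 [simp]: "act I3 I3 (pv p) = pv (op33 ss p)"
proof -
  have "act I3 I3 (pv p) = ss *\<^sub>C pv p - act I2 I2 (pv p)"
    using pv_Z[of p] by (simp add: algebra_simps)
  also have "\<dots> = pv (smult ss p - op22 ss p)" by simp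
  also have "smult ss p - op22 ss p = op33 ss p"
    by (simp add: op22_def op33_def poly_eq_pointwise_iff algebra_simps)
  finally show ?thesis .
qed

lemma E32_v0: "act I3 I2 v0 = pv (smult (1 / (4 * aa)) [:casimir, -2, -1:])"
proof -
  have "act I2 I3 (act I3 I2 v0) = aa *\<^sub>C act I3 I2 v0 + H0 act v0"
    using comm_even[of I2 I3 I3 I2 v0] by (simp add: ssign_def H0_def)
  then have "H0 act (H0 act v0) + (2 * aa) *\<^sub>C act I3 I2 v0 + 2 *\<^sub>C H0 act v0
      + (2 * aa) *\<^sub>C act I3 I2 v0 = casimir *\<^sub>C v0"
    using v0_casimir by (simp add: cscale_add_right cscale_cscale add.assoc)
  moreover have "(4 * aa) *\<^sub>C act I3 I2 v0 = (2 * aa) *\<^sub>C act I3 I2 v0 + (2 * aa) *\<^sub>C act I3 I2 v0"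
    by (simp flip: cscale_add_left)
  ultimately have "(4 * aa) *\<^sub>C act I3 I2 v0 = pv [:casimir, -2, -1:]"
    by (simp add: H0_poly_pCons cscale_minus_left cscale_two cscale_one algebra_simps)
  also have "\<dots> = (4 * aa) *\<^sub>C pv (smult (1 / (4 * aa)) [:casimir, -2, -1:])"
    using a_nz by (simp only: H0_poly_smult[OF v0_in] cscale_cscale) (simp add: cscale_one)
  finally show ?thesis using a_nz by (simp add: cscale_cancel_left)
qed

lemma pv_32 [simp]: "act I3 I2 (pv p) = pv (op32 casimir aa p)"
proof -
  have "act I3 I2 (pv p) = H0_poly act (pcompose p [:- (- 2), 1:]) (act I3 I2 v0)"
    by (rule H0_poly_act[OF H0_comm_32]) simp_all
  then show ?thesis
    by (simp only: E32_v0 H0_poly_mult[OF v0_in, symmetric] minus_minus op32_def)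
qed

fun Phi :: "quad \<Rightarrow> 'v" where
  "Phi (p0, p2, p3, p23) = pv p0 + act I2 I1 (pv p2) + act I3 I1 (pv p3) + act I2 I1 (act I3 I1 (pv p23))"

declare Phi.simps [simp del]

lemma Phi_act: "act i j (Phi P) = Phi (qact i j P)"
  by (cases P; cases i; cases j)
    (simp_all add: Phi.simps cscale_add_left cscale_diff_left cscale_one cscale_cscale cscale_add_right
      cscale_diff_right cscale_minus_left cscale_minus_right cscale_two algebra_simps)

lemma Phi_in [simp]: "Phi P \<in> S"
  by (cases P) (simp add: Phi.simps)

lemma Phi_add: "Phi (P + Q) = Phi P + Phi Q"
  by (cases P; cases Q) (simp add: Phi.simps algebra_simps)

lemma Phi_scale: "Phi (quad_scale c P) = c *\<^sub>C Phi P"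
  by (cases P) (simp add: Phi.simps cscale_add_right)

lemma Phi_zero [simp]: "Phi 0 = 0"
  by (simp add: Phi.simps zero_prod_def)

lemma Phi_diff: "Phi (P - Q) = Phi P - Phi Q"
  using Phi_add[of "P - Q" Q] by (simp add: eq_diff_eq)

lemma Phi_v0 [simp]: "Phi (1, 0, 0, 0) = v0"
  by (simp add: Phi.simps)

lemma whitt_gen_Phi:
  assumes "qact I1 I2 X = 0" "qact I1 I3 X = 0" "qact I2 I3 X = quad_scale (zeta I2 I3) X"
    "qact I1 I1 X = quad_scale (mu I1) X" "qact I2 I2 X + qact I3 I3 X = quad_scale (mu I2 + mu I3) X"
    "qact I2 I2 (qact I2 I2 X - qact I3 I3 X) - qact I3 I3 (qact I2 I2 X - qact I3 I3 X)
       + quad_scale 2 (qact I2 I3 (qact I3 I2 X)) + quad_scale 2 (qact I3 I2 (quad_scale (zeta I2 I3) X))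
     = quad_scale ((mu I2 - mu I3)^2 + 2 * (mu I2 - mu I3)) X"
  shows "whitt_gen mu zeta act (Phi X)"
  unfolding whitt_gen_def H0_def
  by (simp only: Phi_act Phi_diff[symmetric] Phi_add[symmetric] Phi_scale[symmetric] assms Phi_zero)

end

fun interleave_coeff :: "quad \<Rightarrow> nat \<Rightarrow> complex" where
  "interleave_coeff (p0, p2, p3, p23) n =
     (if n mod 4 = 0 then coeff p0 (n div 4) else if n mod 4 = 1 then coeff p2 (n div 4)
      else if n mod 4 = 2 then coeff p3 (n div 4) else coeff p23 (n div 4))"

definition interleave :: "quad \<Rightarrow> complex poly" where
  "interleave P = Abs_poly (interleave_coeff P)"

lemma coeff_interleave: "coeff (interleave P) = interleave_coeff P"
proof -
  obtain p0 p2 p3 p23 where P: "P = (p0, p2, p3, p23)" by (cases P)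
  let ?D = "degree p0 + degree p2 + degree p3 + degree p23"
  have "interleave_coeff P i = 0" if "i > 4 * ?D + 3" for i
  proof -
    have "4 * (?D + 1) \<le> i" using that by simp
    then have "?D + 1 \<le> i div 4"
      using div_le_mono[of "4 * (?D + 1)" i 4] by simp
    then show ?thesis by (simp add: P coeff_eq_0)
  qed
  then show ?thesis
    unfolding interleave_def by (intro coeff_Abs_poly[where n = "4 * ?D + 3"]) auto
qed

lemma interleave_add: "interleave (P + Q) = interleave P + interleave Q"
  by (cases P; cases Q) (simp add: poly_eq_iff coeff_interleave)

lemma interleave_scale: "interleave (quad_scale c P) = smult c (interleave P)"
  by (cases P) (simp add: poly_eq_iff coeff_interleave)

lemma interleave_diff: "interleave (P - Q) = interleave P - interleave Q"
  using interleave_add[of "P - Q" Q] by (simp add: eq_diff_eq)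

lemma interleave_eq_0: "interleave P = 0 \<Longrightarrow> P = 0"
proof -
  assume "interleave P = 0"
  then have c: "interleave_coeff P n = 0" for n by (metis coeff_0 coeff_interleave)
  obtain p0 p2 p3 p23 where P: "P = (p0, p2, p3, p23)" by (cases P)
  have div4: "(4 * k + r) div 4 = k" "(4 * k + r) mod 4 = r" if "r < 4" for k r :: nat
    using that by simp_all
  have "coeff p0 k = 0" "coeff p2 k = 0" "coeff p3 k = 0" "coeff p23 k = 0" for k
    using c[of "4 * k"] c[of "4 * k + 1"] c[of "4 * k + 2"] c[of "4 * k + 3"]
    by (simp_all only: P div4 interleave_coeff.simps) simp_all
  then show "P = 0" by (simp add: P poly_eq_iff zero_prod_def)
qed

locale induced_module = whittaker_vector S act v0 lam zeta
  for S :: "'v::cvs set" and act v0 lam zeta +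
  assumes v0_nz: "v0 \<noteq> 0" and gen_v0: "gen S act {v0} = S"
    and universal: "\<forall>(S'::'v set) act' u. is_rep S' act' \<and> u \<in> S' \<and> whitt_gen lam zeta act' u \<longrightarrow>
        (\<exists>f. hom S act S' act' f \<and> f v0 = u)"
begin

lemma pv_eq_0: "pv q = 0 \<Longrightarrow> q = 0"
proof (rule ccontr)
  assume "pv q = 0" "q \<noteq> 0"
  have "1 \<in> {q. pv q = 0}"
  proof (rule shift_invariant_subspace_contains_one[of _ "-2"])
    fix r assume "r \<in> {q. pv q = 0}"
    moreover have "aa *\<^sub>C pv (pcompose r [:- 2, 1:]) = act I2 I3 (pv r)"
      by (simp add: op23_def)
    ultimately show "pcompose r [:- 2, 1:] \<in> {q. pv q = 0}"
      using a_nz by (simp add: cscale_eq_0_iff)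
  qed (use \<open>pv q = 0\<close> \<open>q \<noteq> 0\<close> in auto)
  then show False using v0_nz by simp
qed

text \<open>The universal property only quotes modules whose carrier lies in the type of S, so the
  explicit model is transported into that type along this injection.\<close>
definition quad_embed :: "quad \<Rightarrow> 'v" where
  "quad_embed P = pv (interleave P)"

lemma quad_embed_add: "quad_embed (P + Q) = quad_embed P + quad_embed Q"
  and quad_embed_scale: "quad_embed (quad_scale c P) = c *\<^sub>C quad_embed P"
  and quad_embed_diff: "quad_embed (P - Q) = quad_embed P - quad_embed Q"
  by (simp_all add: quad_embed_def interleave_add interleave_scale interleave_diff)

lemma quad_embed_zero [simp]: "quad_embed 0 = 0"
  using quad_embed_scale[of 0 0] by simp

lemma quad_embed_eq_iff [simp]: "quad_embed P = quad_embed Q \<longleftrightarrow> P = Q"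
proof
  assume "quad_embed P = quad_embed Q"
  then have "pv (interleave (P - Q)) = 0" by (simp add: quad_embed_def interleave_diff)
  then show "P = Q" using pv_eq_0 interleave_eq_0 by fastforce
qed simp

lemma quad_embed_eq_0 [simp]: "quad_embed P = 0 \<longleftrightarrow> P = 0"
  using quad_embed_eq_iff[of P 0] by simp

definition model_act :: "idx \<Rightarrow> idx \<Rightarrow> 'v \<Rightarrow> 'v" where
  "model_act i j x = quad_embed (qact i j (inv quad_embed x))"

lemma model_act_embed [simp]: "model_act i j (quad_embed P) = quad_embed (qact i j P)"
  by (simp add: model_act_def inv_f_f inj_def)

lemma model_is_rep: "is_rep (range quad_embed) model_act"
  unfolding is_rep_def subspace_c_def
proof (intro conjI allI ballI)
  show "0 \<in> range quad_embed" by (metis quad_embed_zero rangeI)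
next
  fix x y assume "x \<in> range quad_embed" "y \<in> range quad_embed"
  then obtain P Q where "x = quad_embed P" "y = quad_embed Q" by blast
  then show "x + y \<in> range quad_embed" by (metis quad_embed_add rangeI)
next
  fix c x assume "x \<in> range quad_embed"
  then obtain P where "x = quad_embed P" by blast
  then show "c *\<^sub>C x \<in> range quad_embed" by (metis quad_embed_scale rangeI)
next
  fix i j x assume "x \<in> range quad_embed"
  then show "model_act i j x \<in> range quad_embed" by auto
next
  fix i j x y assume "x \<in> range quad_embed" "y \<in> range quad_embed"
  then obtain P Q where "x = quad_embed P" "y = quad_embed Q" by blast
  then show "model_act i j (x + y) = model_act i j x + model_act i j y"
    by (simp flip: quad_embed_add add: quad_act_add)
next
  fix i j c x assume "x \<in> range quad_embed"
  then obtain P where "x = quad_embed P" by blast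
  then show "model_act i j (c *\<^sub>C x) = c *\<^sub>C model_act i j x"
    by (simp flip: quad_embed_scale add: quad_act_scale)
next
  fix i j k l x assume "x \<in> range quad_embed"
  then obtain P where x: "x = quad_embed P" by auto
  have "model_act i j (model_act k l x) - ssign i j k l *\<^sub>C model_act k l (model_act i j x) =
      quad_embed (qact i j (qact k l P) - quad_scale (ssign i j k l) (qact k l (qact i j P)))"
    by (simp add: x quad_embed_diff quad_embed_scale)
  also have "\<dots> = quad_embed ((if j = k then qact i l P else 0)
      - quad_scale (ssign i j k l) (if l = i then qact k j P else 0))"
    by (simp only: quad_act_bracket[OF a_nz])
  also have "\<dots> = (if j = k then model_act i l x else 0)
      - ssign i j k l *\<^sub>C (if l = i then model_act k j x else 0)"
    by (simp add: x quad_embed_diff quad_embed_scale)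
  finally show "model_act i j (model_act k l x) - ssign i j k l *\<^sub>C model_act k l (model_act i j x) =
      (if j = k then model_act i l x else 0) - ssign i j k l *\<^sub>C (if l = i then model_act k j x else 0)" .
qed

lemma model_whitt: "whitt_gen lam zeta model_act (quad_embed (1, 0, 0, 0))"
  unfolding whitt_gen_def H0_def using a_nz
  by (simp flip: quad_embed_add quad_embed_scale quad_embed_diff
      add: op_defs poly_eq_pointwise_iff poly_pcompose zero_prod_def field_simps casimir_def)

interpretation model: rep "range quad_embed" model_act
  by (rule rep.intro, rule model_is_rep)

definition to_model :: "'v \<Rightarrow> 'v" where
  "to_model = (SOME f. hom S act (range quad_embed) model_act f \<and> f v0 = quad_embed (1, 0, 0, 0))"

lemma to_model_hom: "hom S act (range quad_embed) model_act to_model"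
  and to_model_v0: "to_model v0 = quad_embed (1, 0, 0, 0)"
proof -
  have "\<exists>f. hom S act (range quad_embed) model_act f \<and> f v0 = quad_embed (1, 0, 0, 0)"
    using universal model_is_rep model_whitt by blast
  then have "hom S act (range quad_embed) model_act to_model \<and> to_model v0 = quad_embed (1, 0, 0, 0)"
    unfolding to_model_def by (rule someI_ex)
  then show "hom S act (range quad_embed) model_act to_model" "to_model v0 = quad_embed (1, 0, 0, 0)"
    by auto
qed

lemma to_model_in: "x \<in> S \<Longrightarrow> to_model x \<in> range quad_embed"
  and to_model_add: "x \<in> S \<Longrightarrow> y \<in> S \<Longrightarrow> to_model (x + y) = to_model x + to_model y"
  and to_model_cscale: "x \<in> S \<Longrightarrow> to_model (c *\<^sub>C x) = c *\<^sub>C to_model x"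
  and to_model_act: "x \<in> S \<Longrightarrow> to_model (act i j x) = model_act i j (to_model x)"
  using to_model_hom by (auto simp: hom_def)

lemma to_model_H0: "x \<in> S \<Longrightarrow> to_model (H0 act x) = H0 model_act (to_model x)"
  using to_model_add[of "act I2 I2 x - act I3 I3 x" "act I3 I3 x"]
  by (simp add: H0_def to_model_act eq_diff_eq)

lemma to_model_H0_poly: "x \<in> S \<Longrightarrow> to_model (H0_poly act q x) = H0_poly model_act q (to_model x)"
proof (induction q)
  case 0
  then show ?case using to_model_add[of 0 0] by simp
next
  case (pCons c q)
  then show ?case
    using to_model_in[OF pCons.prems]
    by (simp add: H0_poly_pCons model.H0_poly_pCons to_model_add to_model_cscale to_model_H0)
qed

lemma model_H0_poly: "H0_poly model_act q (quad_embed (1, 0, 0, 0)) = quad_embed (q, 0, 0, 0)"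
proof (induction q)
  case 0
  then show ?case by (simp add: zero_prod_def)
next
  case (pCons c q)
  have "quad_scale c (1, 0, 0, 0) + (qact I2 I2 (q, 0, 0, 0) - qact I3 I3 (q, 0, 0, 0)) = (pCons c q, 0, 0, 0)"
    by (simp add: op_defs poly_eq_pointwise_iff algebra_simps)
  then show ?case
    using pCons by (simp add: model.H0_poly_pCons H0_def flip: quad_embed_add quad_embed_scale quad_embed_diff
        del: quad_act.simps quad_scale.simps)
qed

lemma to_model_Phi: "to_model (Phi P) = quad_embed P"
proof -
  obtain p0 p2 p3 p23 where P: "P = (p0, p2, p3, p23)" by (cases P)
  have pv: "to_model (pv p) = quad_embed (p, 0, 0, 0)" for p
    by (simp add: to_model_H0_poly to_model_v0 model_H0_poly)
  show ?thesis
    by (simp add: P Phi.simps to_model_add to_model_act pv del: quad_act.simps)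
      (simp flip: quad_embed_add)
qed

lemma Phi_eq_iff [simp]: "Phi P = Phi Q \<longleftrightarrow> P = Q"
  by (metis to_model_Phi quad_embed_eq_iff)

lemma submodule_range_Phi: "submodule S act (range Phi)"
  unfolding submodule_def subspace_c_def
proof (intro conjI ballI allI)
  show "range Phi \<subseteq> S" by auto
  show "0 \<in> range Phi" by (metis Phi_zero rangeI)
next
  fix x y assume "x \<in> range Phi" "y \<in> range Phi"
  then obtain P Q where "x = Phi P" "y = Phi Q" by blast
  then show "x + y \<in> range Phi" by (metis Phi_add rangeI)
next
  fix c x assume "x \<in> range Phi"
  then obtain P where "x = Phi P" by blast
  then show "c *\<^sub>C x \<in> range Phi" by (metis Phi_scale rangeI)
next
  fix i j x assume "x \<in> range Phi"
  then obtain P where "x = Phi P" by blast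
  then show "act i j x \<in> range Phi" by (metis Phi_act rangeI)
qed

lemma Phi_surj: "x \<in> S \<Longrightarrow> \<exists>P. x = Phi P"
proof -
  have "v0 \<in> range Phi" using Phi_v0 by (metis rangeI)
  then have "S \<subseteq> range Phi"
    using gen_least[OF submodule_range_Phi, of "{v0}"] gen_v0 by simp
  then show "x \<in> S \<Longrightarrow> \<exists>P. x = Phi P" by blast
qed

end

section \<open>The submodule generated by w\<close>

context whittaker_vector
begin

definition quad_submodule :: "quad set \<Rightarrow> bool" where
  "quad_submodule Q \<longleftrightarrow> 0 \<in> Q \<and> (\<forall>P\<in>Q. \<forall>P'\<in>Q. P + P' \<in> Q) \<and>
     (\<forall>c. \<forall>P\<in>Q. quad_scale c P \<in> Q) \<and> (\<forall>i j. \<forall>P\<in>Q. qact i j P \<in> Q)"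

context
  fixes Q assumes Q: "quad_submodule Q"
begin

lemma quad_submodule_zero: "0 \<in> Q"
  and quad_submodule_add: "P \<in> Q \<Longrightarrow> P' \<in> Q \<Longrightarrow> P + P' \<in> Q"
  and quad_submodule_scale: "P \<in> Q \<Longrightarrow> quad_scale c P \<in> Q"
  and quad_submodule_act: "P \<in> Q \<Longrightarrow> qact i j P \<in> Q"
  using Q by (simp_all add: quad_submodule_def)

lemma quad_submodule_diff: "P \<in> Q \<Longrightarrow> P' \<in> Q \<Longrightarrow> P - P' \<in> Q"
  using quad_submodule_add[of P "- P'"] quad_submodule_scale[of P' "- 1"]
  by (simp add: quad_scale_minus_one)

lemma quad_submodule_weight_diff: "P \<in> Q \<Longrightarrow> qact i j P - quad_scale c P \<in> Q"
  by (intro quad_submodule_diff quad_submodule_act quad_submodule_scale)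

lemma quad_submodule_H0_multiples:
  assumes "e 1 \<in> Q" and "e 0 = 0"
    and e_pCons: "\<And>c r. e (pCons c r) = quad_scale c (e 1) + (qact I2 I2 (e r) - qact I3 I3 (e r))"
  shows "e r \<in> Q"
proof (induction r)
  case 0
  then show ?case using \<open>e 0 = 0\<close> quad_submodule_zero by simp
next
  case (pCons c r)
  then show ?case
    unfolding e_pCons using \<open>e 1 \<in> Q\<close>
    by (intro quad_submodule_add quad_submodule_scale quad_submodule_diff quad_submodule_act)
qed

lemma quad_submodule_descent:
  assumes e_diff: "\<And>p q. e (p - q) = e p - e q" and e_smult: "\<And>c p. e (smult c p) = quad_scale c (e p)"
    and e_23: "\<And>r. qact I2 I3 (e r) = quad_scale aa (e (pcompose r [:-2, 1:]))"
    and "r \<noteq> 0" "e r \<in> Q"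
  shows "e 1 \<in> Q"
proof -
  have "1 \<in> {r. e r \<in> Q}"
  proof (rule shift_invariant_subspace_contains_one[of _ "-2"])
    fix r assume "r \<in> {r. e r \<in> Q}"
    then have "quad_scale (1 / aa) (qact I2 I3 (e r)) \<in> Q"
      by (simp add: quad_submodule_scale quad_submodule_act)
    then show "pcompose r [:- 2, 1:] \<in> {r. e r \<in> Q}"
      using a_nz by (simp add: e_23 quad_scale_scale)
  qed (use assms in \<open>auto simp: e_smult quad_submodule_scale quad_submodule_diff\<close>)
  then show ?thesis by simp
qed

lemma quad_submodule_fst:
  assumes "P \<in> Q"
  shows "(fst P, 0, 0, 0) \<in> Q"
proof -
  obtain p0 p2 p3 p23 where P: "P = (p0, p2, p3, p23)" by (cases P)
  let ?P1 = "qact I1 I1 P - quad_scale (l1 - 1) P"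
  have "qact I1 I1 ?P1 - quad_scale (l1 - 2) ?P1 \<in> Q"
    using assms by (intro quad_submodule_weight_diff)
  moreover have "qact I1 I1 ?P1 - quad_scale (l1 - 2) ?P1 = quad_scale 2 (p0, 0, 0, 0)"
    by (simp add: P zero_prod_def poly_eq_pointwise_iff algebra_simps)
  ultimately have "quad_scale (1 / 2) (quad_scale 2 (p0, 0, 0, 0)) \<in> Q"
    by (metis quad_submodule_scale)
  then show ?thesis by (simp add: P quad_scale_scale)
qed

lemma quad_submodule_unit:
  assumes "p \<noteq> 0" "(p, 0, 0, 0) \<in> Q"
  shows "(1, 0, 0, 0) \<in> Q"
  using quad_submodule_descent[of "\<lambda>p. (p, 0, 0, 0)"] assms by (simp add: zero_prod_def op23_def)

end

lemma submodule_Phi_image: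
  assumes "quad_submodule Q"
  shows "submodule S act (Phi ` Q)"
  unfolding submodule_def subspace_c_def
proof (intro conjI ballI allI)
  show "Phi ` Q \<subseteq> S" by auto
  show "0 \<in> Phi ` Q" using quad_submodule_zero[OF assms] by (metis Phi_zero image_eqI)
next
  fix x y assume "x \<in> Phi ` Q" "y \<in> Phi ` Q"
  then obtain P P' where "P \<in> Q" "P' \<in> Q" "x = Phi P" "y = Phi P'" by blast
  then show "x + y \<in> Phi ` Q" by (metis Phi_add quad_submodule_add[OF assms] image_eqI)
next
  fix c x assume "x \<in> Phi ` Q"
  then obtain P where "P \<in> Q" "x = Phi P" by blast
  then show "c *\<^sub>C x \<in> Phi ` Q" by (metis Phi_scale quad_submodule_scale[OF assms] image_eqI)
next
  fix i j x assume "x \<in> Phi ` Q"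
  then obtain P where "P \<in> Q" "x = Phi P" by blast
  then show "act i j x \<in> Phi ` Q" by (metis Phi_act quad_submodule_act[OF assms] image_eqI)
qed

lemma quad_submodule_preimage:
  assumes "submodule S act N"
  shows "quad_submodule {P. Phi P \<in> N}"
  using assms unfolding quad_submodule_def submodule_def subspace_c_def
  by (simp add: Phi_add Phi_scale flip: Phi_act)

end

locale atypical_module = induced_module S act v0 lam zeta
  for S :: "'v::cvs set" and act v0 lam zeta +
  assumes casimir_atypical: "casimir = (2 - 2 * (l1 + ss / 2))^2 - 2 * (2 - 2 * (l1 + ss / 2))"
begin

abbreviation "uu \<equiv> 2 - 2 * (l1 + ss / 2)"

text \<open>w_quad r are the coordinates of r(H0) applied to w_quad 1, of which w is a multiple.\<close>
definition w_quad :: "complex poly \<Rightarrow> quad" where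
  "w_quad r = (0, pcompose r [:1, 1:] * [:uu, 1:], smult (2 * aa) (pcompose r [:-1, 1:]), 0)"

definition top_quad :: "complex poly \<Rightarrow> quad" where
  "top_quad s = (0, 0, 0, s)"

definition N_quads :: "quad set" where
  "N_quads = {w_quad r + top_quad s | r s. True}"

lemma w_quad_1: "w_quad 1 = (0, [:uu, 1:], [:2 * aa:], 0)"
  by (simp add: w_quad_def poly_eq_pointwise_iff poly_pcompose)

lemma w_quad_0 [simp]: "w_quad 0 = 0"
  and top_quad_0 [simp]: "top_quad 0 = 0"
  by (simp_all add: w_quad_def top_quad_def zero_prod_def)

lemma w_quad_add: "w_quad (r + r') = w_quad r + w_quad r'"
  and w_quad_diff: "w_quad (r - r') = w_quad r - w_quad r'"
  and w_quad_smult: "w_quad (smult c r) = quad_scale c (w_quad r)"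
  by (simp_all add: w_quad_def poly_eq_pointwise_iff poly_pcompose field_simps)

lemma top_quad_add: "top_quad (s + s') = top_quad s + top_quad s'"
  and top_quad_smult: "top_quad (smult c s) = quad_scale c (top_quad s)"
  by (simp_all add: top_quad_def)

lemma N_quadsI: "w_quad r + top_quad s \<in> N_quads"
  by (auto simp: N_quads_def)

lemma w_quad_in_N_quads: "w_quad r \<in> N_quads"
  and top_quad_in_N_quads: "top_quad s \<in> N_quads"
  and zero_in_N_quads: "0 \<in> N_quads"
  using N_quadsI[of r 0] N_quadsI[of 0 s] N_quadsI[of 0 0] by simp_all

lemma N_quads_add:
  assumes "P \<in> N_quads" "P' \<in> N_quads"
  shows "P + P' \<in> N_quads"
proof -
  obtain r s r' s' where "P = w_quad r + top_quad s" "P' = w_quad r' + top_quad s'"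
    using assms by (auto simp: N_quads_def)
  then have "P + P' = w_quad (r + r') + top_quad (s + s')"
    by (simp add: w_quad_add top_quad_add algebra_simps)
  then show ?thesis using N_quadsI by simp
qed

lemma N_quads_scale:
  assumes "P \<in> N_quads"
  shows "quad_scale c P \<in> N_quads"
proof -
  obtain r s where "P = w_quad r + top_quad s"
    using assms by (auto simp: N_quads_def)
  then have "quad_scale c P = w_quad (smult c r) + top_quad (smult c s)"
    by (simp add: w_quad_smult top_quad_smult quad_scale_add)
  then show ?thesis using N_quadsI by simp
qed

lemmas quad_defs = op_defs poly_eq_pointwise_iff poly_pcompose w_quad_def top_quad_def zero_prod_def

lemma qact_w_quad:
  "qact I1 I1 (w_quad r) = w_quad (smult (l1 - 1) r)"
  "qact I2 I2 (w_quad r) = w_quad (r * [:(ss + 1) / 2, 1 / 2:])"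
  "qact I3 I3 (w_quad r) = w_quad (r * [:(ss + 1) / 2, - 1 / 2:])"
  "qact I2 I3 (w_quad r) = quad_scale aa (w_quad (pcompose r [:-2, 1:]))"
  "qact I3 I2 (w_quad r) = w_quad (pcompose r [:2, 1:] * smult (1 / (4 * aa)) [:uu^2 - 1, -2, -1:])"
  "qact I2 I1 (w_quad r) = top_quad (smult (2 * aa) (pcompose r [:-1, 1:]))"
  "qact I3 I1 (w_quad r) = top_quad (- (pcompose r [:1, 1:] * [:uu, 1:]))"
  "qact I1 I2 (w_quad r) = 0"
  "qact I1 I3 (w_quad r) = 0"
  using a_nz
  by ((simp add: quad_defs casimir_atypical; auto simp: field_simps power2_eq_square algebra_simps))+

lemma qact_top_quad:
  "qact I1 I1 (top_quad s) = top_quad (smult (l1 - 2) s)"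
  "qact I2 I2 (top_quad s) = top_quad (op22 ss s + s)"
  "qact I3 I3 (top_quad s) = top_quad (op33 ss s + s)"
  "qact I2 I3 (top_quad s) = top_quad (op23 aa s)"
  "qact I3 I2 (top_quad s) = top_quad (op32 casimir aa s)"
  "qact I2 I1 (top_quad s) = 0"
  "qact I3 I1 (top_quad s) = 0"
  "qact I1 I2 (top_quad s) = w_quad (smult (1 / (4 * aa)) (pcompose s [:1, 1:] * [:1 - uu, 1:]))"
  "qact I1 I3 (top_quad s) = w_quad (smult (1 / 2) (pcompose s [:-1, 1:]))"
  using a_nz
  by ((simp add: quad_defs casimir_atypical; auto simp: field_simps power2_eq_square algebra_simps))+

end

context atypical_module
begin

lemma qact_N_quads:
  assumes "P \<in> N_quads"
  shows "qact i j P \<in> N_quads"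
proof -
  obtain r s where P: "P = w_quad r + top_quad s" using assms by (auto simp: N_quads_def)
  have "qact i j (w_quad r) \<in> N_quads" "qact i j (top_quad s) \<in> N_quads"
    by (cases i; cases j; simp only: qact_w_quad qact_top_quad w_quad_in_N_quads top_quad_in_N_quads
        zero_in_N_quads N_quads_scale)+
  then show ?thesis by (simp add: P quad_act_add N_quads_add)
qed

lemma quad_submodule_N_quads: "quad_submodule N_quads"
  by (simp add: quad_submodule_def zero_in_N_quads N_quads_add N_quads_scale qact_N_quads)

lemma submodule_N: "submodule S act (Phi ` N_quads)"
  by (rule submodule_Phi_image[OF quad_submodule_N_quads])

lemma N_quads_least:
  assumes Q: "quad_submodule Q" and "w_quad 1 \<in> Q"
  shows "N_quads \<subseteq> Q"
proof
  fix P assume "P \<in> N_quads"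
  then obtain r s where P: "P = w_quad r + top_quad s" by (auto simp: N_quads_def)
  have "w_quad r \<in> Q"
    by (rule quad_submodule_H0_multiples[OF Q]) (use assms(2) in \<open>simp_all add: quad_defs field_simps\<close>)
  have "quad_scale (1 / (2 * aa)) (qact I2 I1 (w_quad 1)) = top_quad 1"
    using a_nz by (simp add: qact_w_quad top_quad_def pcompose_1 one_pCons)
  then have "top_quad 1 \<in> Q"
    by (metis assms quad_submodule_scale quad_submodule_act)
  then have "top_quad s \<in> Q"
    by (rule quad_submodule_H0_multiples[OF Q]) (simp_all add: quad_defs field_simps)
  with \<open>w_quad r \<in> Q\<close> show "P \<in> Q" by (simp add: P quad_submodule_add[OF Q])
qed

lemma gen_w_quad:
  assumes "B \<noteq> 0"
  shows "gen S act {Phi (quad_scale B (w_quad 1))} = Phi ` N_quads"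
proof
  show "gen S act {Phi (quad_scale B (w_quad 1))} \<subseteq> Phi ` N_quads"
    using submodule_N w_quad_in_N_quads N_quads_scale
    by (intro gen_least) auto
next
  let ?N = "gen S act {Phi (quad_scale B (w_quad 1))}"
  have Q: "quad_submodule {P. Phi P \<in> ?N}"
    by (intro quad_submodule_preimage submodule_gen) simp
  have "quad_scale B (w_quad 1) \<in> {P. Phi P \<in> ?N}"
    using gen_superset by blast
  then have "quad_scale (1 / B) (quad_scale B (w_quad 1)) \<in> {P. Phi P \<in> ?N}"
    by (rule quad_submodule_scale[OF Q])
  then have "w_quad 1 \<in> {P. Phi P \<in> ?N}"
    using assms by (simp add: quad_scale_scale)
  then show "Phi ` N_quads \<subseteq> ?N"
    using N_quads_least[OF Q] by auto
qed

lemma E13_kernel: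
  assumes "qact I1 I3 (0, p2, p3, 0) = 0"
  shows "(0, p2, p3, 0) = w_quad (smult (1 / (2 * aa)) (pcompose p3 [:1, 1:]))"
proof -
  have "poly p2 y = (y + uu) * poly p3 (y + 2) / (2 * aa)" for y
  proof -
    have "aa * poly p2 y + l1 * poly p3 (y + 2) + (ss / 2 - (y + 2) / 2) * poly p3 (y + 2) = 0"
      using arg_cong[OF assms, of "\<lambda>P. poly (fst P) (y + 2)"]
      by (simp add: op_defs poly_pcompose algebra_simps zero_prod_def)
    then show ?thesis using a_nz by (simp add: field_simps)
  qed
  then show ?thesis
    unfolding w_quad_def using a_nz by (simp add: poly_eq_pointwise_iff poly_pcompose field_simps)
qed

lemma quad_submodule_escape:
  assumes Q: "quad_submodule Q" and "N_quads \<subseteq> Q" "P \<in> Q" "P \<notin> N_quads"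
  shows "(1, 0, 0, 0) \<in> Q"
proof -
  obtain p0 p2 p3 p23 where P: "P = (p0, p2, p3, p23)" by (cases P)
  show ?thesis
  proof (cases "p0 = 0")
    case False
    then show ?thesis
      using quad_submodule_fst[OF Q \<open>P \<in> Q\<close>] quad_submodule_unit[OF Q] by (simp add: P)
  next
    case True
    then have "P - top_quad p23 = (0, p2, p3, 0)" by (simp add: P top_quad_def)
    moreover have "P - top_quad p23 \<in> Q"
      using assms top_quad_in_N_quads by (blast intro: quad_submodule_diff[OF Q])
    ultimately have "qact I1 I3 (0, p2, p3, 0) \<in> Q"
      by (metis quad_submodule_act[OF Q])
    moreover have E13: "qact I1 I3 (0, p2, p3, 0) = (op23 aa p2 + smult l1 p3 + op33 ss p3, 0, 0, 0)"
      by (simp add: op_defs)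
    moreover have "op23 aa p2 + smult l1 p3 + op33 ss p3 \<noteq> 0"
    proof
      assume "op23 aa p2 + smult l1 p3 + op33 ss p3 = 0"
      then have "qact I1 I3 (0, p2, p3, 0) = 0"
        unfolding E13 by (simp add: zero_prod_def)
      have "P = (0, p2, p3, 0) + top_quad p23" by (simp add: P True top_quad_def)
      also have "\<dots> = w_quad (smult (1 / (2 * aa)) (pcompose p3 [:1, 1:])) + top_quad p23"
        using E13_kernel[OF \<open>qact I1 I3 (0, p2, p3, 0) = 0\<close>] by simp
      finally show False using \<open>P \<notin> N_quads\<close> N_quadsI by simp
    qed
    ultimately show ?thesis
      using quad_submodule_unit[OF Q] by metis
  qed
qed

lemma quad_submodule_N_quads_nonzero:
  assumes Q: "quad_submodule Q" and "P \<in> Q" "P \<in> N_quads" "P \<noteq> 0"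
  shows "w_quad 1 \<in> Q"
proof -
  obtain r s where P: "P = w_quad r + top_quad s" using assms by (auto simp: N_quads_def)
  have descent: "w_quad 1 \<in> Q" if "r' \<noteq> 0" "w_quad r' \<in> Q" for r'
    by (rule quad_submodule_descent[OF Q, of w_quad r'])
      (simp_all add: that w_quad_diff w_quad_smult qact_w_quad)
  have "qact I1 I1 P - quad_scale (l1 - 2) P = w_quad r"
    by (simp add: P quad_defs; auto simp: field_simps)
  then have "w_quad r \<in> Q"
    by (metis quad_submodule_weight_diff[OF Q \<open>P \<in> Q\<close>])
  show ?thesis
  proof (cases "r = 0")
    case False
    with \<open>w_quad r \<in> Q\<close> show ?thesis by (intro descent)
  next
    case True
    then have "s \<noteq> 0" "top_quad s \<in> Q"
      using assms P by (auto simp: top_quad_def zero_prod_def)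
    then have "w_quad (smult (1 / 2) (pcompose s [:-1, 1:])) \<in> Q"
      using quad_submodule_act[OF Q, of "top_quad s" I1 I3] by (simp only: qact_top_quad)
    moreover have "smult (1 / 2) (pcompose s [:-1, 1:]) \<noteq> 0"
      using \<open>s \<noteq> 0\<close> pcompose_eq_0[of s "[:-1, 1:]"] by auto
    ultimately show ?thesis by (intro descent)
  qed
qed

lemma unit_quad_notin_N_quads: "(1, 0, 0, 0) \<notin> N_quads"
  by (auto simp: N_quads_def w_quad_def top_quad_def)

lemma w_quad_1_nonzero: "w_quad 1 \<noteq> 0"
  using a_nz by (simp add: w_quad_1 zero_prod_def)

lemma maximal_submodule_N: "maximal_submodule S act (Phi ` N_quads)"
  unfolding maximal_submodule_def
proof (intro conjI allI impI)
  show "submodule S act (Phi ` N_quads)" by (rule submodule_N)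
  show "Phi ` N_quads \<noteq> S"
  proof
    assume "Phi ` N_quads = S"
    then obtain P where "P \<in> N_quads" "Phi (1, 0, 0, 0) = Phi P"
      using Phi_in[of "(1, 0, 0, 0)"] by (metis imageE)
    then show False using unit_quad_notin_N_quads by (metis Phi_eq_iff)
  qed
next
  fix N' assume N': "submodule S act N' \<and> Phi ` N_quads \<subseteq> N'"
  let ?Q = "{P. Phi P \<in> N'}"
  have Q: "quad_submodule ?Q" using N' by (intro quad_submodule_preimage) simp
  show "N' = Phi ` N_quads \<or> N' = S"
  proof (cases "N' = Phi ` N_quads")
    case False
    then obtain x where x: "x \<in> N'" "x \<notin> Phi ` N_quads" using N' by blast
    then have "x \<in> S" using N' by (auto simp: submodule_def)
    then obtain P where "x = Phi P" using Phi_surj by blast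
    then have "(1, 0, 0, 0) \<in> ?Q"
      using x N' by (intro quad_submodule_escape[OF Q]) auto
    then have "gen S act {v0} \<subseteq> N'"
      using N' by (intro gen_least) auto
    then show ?thesis using gen_v0 N' by (auto simp: submodule_def)
  qed simp
qed

lemma simple_N: "simple_mod S act (Phi ` N_quads)"
  unfolding simple_mod_def
proof (intro conjI allI impI)
  show "submodule S act (Phi ` N_quads)" by (rule submodule_N)
  show "Phi ` N_quads \<noteq> {0}"
    using w_quad_in_N_quads[of 1] w_quad_1_nonzero Phi_eq_iff[of "w_quad 1" 0] by force
next
  fix N' assume N': "submodule S act N' \<and> N' \<subseteq> Phi ` N_quads"
  let ?Q = "{P. Phi P \<in> N'}"
  have Q: "quad_submodule ?Q" using N' by (intro quad_submodule_preimage) simp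
  show "N' = {0} \<or> N' = Phi ` N_quads"
  proof (cases "N' = {0}")
    case False
    moreover have "0 \<in> N'" using N' by (simp add: submodule_def subspace_c_def)
    ultimately obtain P where "Phi P \<in> N'" "P \<in> N_quads" "P \<noteq> 0"
      using N' by fastforce
    then have "w_quad 1 \<in> ?Q"
      by (intro quad_submodule_N_quads_nonzero[OF Q]) auto
    then have "Phi ` N_quads \<subseteq> N'"
      using N_quads_least[OF Q] by auto
    then show ?thesis using N' by blast
  qed simp
qed

end

section \<open>Weights and the vector w\<close>

lemma bform_rho_odd_roots:
  "bform (lam + rho) (eps I1 - eps I2) = lam I1 + lam I2"
  "bform (lam + rho) (eps I2 - eps I1) = - (lam I1 + lam I2)"
  "bform (lam + rho) (eps I1 - eps I3) = lam I1 + lam I3 - 1"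
  "bform (lam + rho) (eps I3 - eps I1) = - (lam I1 + lam I3 - 1)"
  by (simp_all add: bform_def rho_def eps_def algebra_simps)

lemma atypical_iff: "atypical lam \<longleftrightarrow> lam I1 + lam I2 = 0 \<or> lam I1 + lam I3 = 1"
  unfolding atypical_def odd_roots_def
  by (simp only: bex_simps insert_iff bform_rho_odd_roots neg_equal_0_iff_equal right_minus_eq) blast

lemma atypical_casimir:
  assumes "atypical lam"
  shows "(lam I2 - lam I3)^2 + 2 * (lam I2 - lam I3) =
    (2 - 2 * (lam I1 + (lam I2 + lam I3) / 2))^2 - 2 * (2 - 2 * (lam I1 + (lam I2 + lam I3) / 2))"
proof -
  have "lam I1 = - lam I2 \<or> lam I1 = 1 - lam I3"
    using assms unfolding atypical_iff by (auto simp: eq_neg_iff_add_eq_0 eq_diff_eq)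
  then show ?thesis
    by (elim disjE; simp add: power2_eq_square field_simps; algebra)
qed

lemma lowered_weight:
  assumes "lamu \<in> W_orbit_dot lam" "alpha \<in> pos_odd_roots" "bform (lamu + rho) alpha = 0"
  defines "mu \<equiv> lamu - alpha"
  shows "mu I1 = lam I1 - 1 \<and> mu I2 + mu I3 = lam I2 + lam I3 + 1 \<and>
    (mu I2 - mu I3)^2 + 2 * (mu I2 - mu I3) = (2 - 2 * (lam I1 + (lam I2 + lam I3) / 2))^2 - 1"
proof -
  have orbit: "lam I1 = lamu I1" "lam I2 + lam I3 = lamu I2 + lamu I3"
    using assms(1) by (auto simp: W_orbit_dot_def srefl_def rho0_def eps_def)
  have "alpha = eps I1 - eps I2 \<or> alpha = eps I1 - eps I3"
    using assms(2) by (simp add: pos_odd_roots_def)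
  then have "alpha = eps I1 - eps I2 \<and> lamu I1 = - lamu I2 \<or> alpha = eps I1 - eps I3 \<and> lamu I1 = 1 - lamu I3"
    using assms(3) by (elim disjE) (simp_all add: bform_rho_odd_roots eq_neg_iff_add_eq_0 eq_diff_eq)
  then show ?thesis
  proof (elim disjE conjE)
    assume alpha: "alpha = eps I1 - eps I2" and "lamu I1 = - lamu I2"
    then show ?thesis
      unfolding mu_def orbit alpha by (simp add: eps_def power2_eq_square field_simps; algebra)
  next
    assume alpha: "alpha = eps I1 - eps I3" and "lamu I1 = 1 - lamu I3"
    then show ?thesis
      unfolding mu_def orbit alpha by (simp add: eps_def power2_eq_square field_simps; algebra)
  qed
qed

context induced_module
begin

lemma gen0_v0_subset: "gen0 S act {v0} \<subseteq> Phi ` range (\<lambda>p. (p, 0, 0, 0))"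
proof -
  let ?G = "Phi ` range (\<lambda>p. (p, 0, 0, 0))"
  have "subspace_c ?G"
    unfolding subspace_c_def
  proof (intro conjI ballI allI)
    show "0 \<in> ?G" by (metis Phi_zero rangeI image_eqI zero_prod_def)
  next
    fix x y assume "x \<in> ?G" "y \<in> ?G"
    then obtain p q where "x = Phi (p, 0, 0, 0)" "y = Phi (q, 0, 0, 0)" by blast
    then have "x + y = Phi (p + q, 0, 0, 0)" by (simp flip: Phi_add)
    then show "x + y \<in> ?G" by blast
  next
    fix c x assume "x \<in> ?G"
    then obtain p where "x = Phi (p, 0, 0, 0)" by blast
    then have "c *\<^sub>C x = Phi (smult c p, 0, 0, 0)" by (simp flip: Phi_scale)
    then show "c *\<^sub>C x \<in> ?G" by blast
  qed
  moreover have "act i j x \<in> ?G" if "in_g0 i j" "x \<in> ?G" for i j x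
  proof -
    obtain p where x: "x = Phi (p, 0, 0, 0)" using \<open>x \<in> ?G\<close> by blast
    obtain q where "qact i j (p, 0, 0, 0) = (q, 0, 0, 0)"
      using \<open>in_g0 i j\<close> by (cases i; cases j) (auto simp: in_g0_def op_defs)
    then show ?thesis unfolding x Phi_act by blast
  qed
  moreover have "v0 \<in> ?G" using Phi_v0 by (metis rangeI image_eqI)
  ultimately show ?thesis
    unfolding gen0_def by auto
qed

lemma whittaker_in_gen0:
  assumes "v \<in> gen0 S act {v0}" "v \<noteq> 0" "act I2 I3 v = aa *\<^sub>C v"
  obtains \<sigma> where "\<sigma> \<noteq> 0" "v = \<sigma> *\<^sub>C v0"
proof -
  obtain p where v: "v = Phi (p, 0, 0, 0)" using assms(1) gen0_v0_subset by blast
  have "Phi (op23 aa p, 0, 0, 0) = Phi (smult aa p, 0, 0, 0)"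
    using assms(3) unfolding v Phi_act by (simp add: op_defs flip: Phi_scale)
  then have "op23 aa p = smult aa p" by (metis Phi_eq_iff prod.inject)
  then have "pcompose p [:-2, 1:] = p"
    using a_nz by (simp add: op23_def poly_eq_pointwise_iff)
  then have "p = [:poly p 0:]" by (rule shift_invariant_poly_const[rotated]) simp
  then obtain c where "p = [:c:]" by blast
  then have "v = c *\<^sub>C v0" and "c \<noteq> 0"
    using v assms(2) by (auto simp: Phi.simps)
  then show ?thesis by (rule that[rotated])
qed

lemma gen_insert_generator:
  assumes "\<sigma> \<noteq> 0" "N \<subseteq> S"
  shows "gen S act (insert (\<sigma> *\<^sub>C v0) N) = S"
proof -
  let ?M = "gen S act (insert (\<sigma> *\<^sub>C v0) N)"
  have M: "submodule S act ?M" using assms by (intro submodule_gen) auto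
  have "\<sigma> *\<^sub>C v0 \<in> ?M" using gen_superset by blast
  then have "(1 / \<sigma>) *\<^sub>C (\<sigma> *\<^sub>C v0) \<in> ?M"
    using M by (simp add: submodule_def subspace_c_def)
  then have "v0 \<in> ?M" using assms by (simp add: cscale_cscale cscale_one)
  then have "gen S act {v0} \<subseteq> ?M" using M by (intro gen_least) auto
  then show ?thesis using gen_v0 M by (auto simp: submodule_def)
qed

end

context atypical_module
begin

lemma w_coordinates:
  assumes "\<sigma> \<noteq> 0" and v: "v = \<sigma> *\<^sub>C v0"
  defines "v4 \<equiv> (2 * aa) *\<^sub>C act I3 I1 v + act I2 I1 (H0 act v)"
  obtains B where "B \<noteq> 0"
    "(if chi0_z lam \<noteq> 1 then act I2 I1 v + (1 / (2 * (1 - chi0_z lam))) *\<^sub>C v4 else v4) =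
     Phi (quad_scale B (w_quad 1))"
proof -
  let ?V = "quad_scale \<sigma> (1, 0, 0, 0)"
  have v_Phi: "v = Phi ?V" by (simp only: v Phi_scale Phi_v0)
  have v4: "v4 = Phi (quad_scale (2 * aa) (qact I3 I1 ?V) + qact I2 I1 (qact I2 I2 ?V - qact I3 I3 ?V))"
    unfolding v4_def v_Phi H0_def
    by (simp only: Phi_act Phi_diff[symmetric] Phi_scale[symmetric] Phi_add[symmetric])
  have v2: "act I2 I1 v = Phi (qact I2 I1 ?V)" by (simp only: v_Phi Phi_act)
  show ?thesis
  proof (cases "chi0_z lam = 1")
    case True
    then have "quad_scale (2 * aa) (qact I3 I1 ?V) + qact I2 I1 (qact I2 I2 ?V - qact I3 I3 ?V)
        = quad_scale \<sigma> (w_quad 1)"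
      by (simp add: chi0_z_def w_quad_1 op_defs poly_eq_pointwise_iff zero_prod_def; auto simp: field_simps)
    with True v4 \<open>\<sigma> \<noteq> 0\<close> show ?thesis
      by (intro that[of \<sigma>]) simp_all
  next
    case False
    then have "2 * (1 - chi0_z lam) \<noteq> 0" by simp
    then have "qact I2 I1 ?V + quad_scale (1 / (2 * (1 - chi0_z lam)))
          (quad_scale (2 * aa) (qact I3 I1 ?V) + qact I2 I1 (qact I2 I2 ?V - qact I3 I3 ?V))
        = quad_scale (\<sigma> / (2 * (1 - chi0_z lam))) (w_quad 1)"
      by (simp add: chi0_z_def w_quad_1 op_defs poly_eq_pointwise_iff zero_prod_def; auto simp: field_simps)
    then have "act I2 I1 v + (1 / (2 * (1 - chi0_z lam))) *\<^sub>C v4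
        = Phi (quad_scale (\<sigma> / (2 * (1 - chi0_z lam))) (w_quad 1))"
      by (simp only: v2 v4 flip: Phi_scale Phi_add)
    with False \<open>\<sigma> \<noteq> 0\<close> show ?thesis
      by (intro that[of "\<sigma> / (2 * (1 - chi0_z lam))"]) simp_all
  qed
qed

lemma iso_Ltilde_N:
  assumes "mu I1 = l1 - 1" "mu I2 + mu I3 = ss + 1" "(mu I2 - mu I3)^2 + 2 * (mu I2 - mu I3) = uu^2 - 1"
  shows "iso_Ltilde mu zeta S act (Phi ` N_quads)"
proof (rule iso_LtildeI[OF simple_N])
  show "Phi (w_quad 1) \<in> Phi ` N_quads" using w_quad_in_N_quads by blast
  show "Phi (w_quad 1) \<noteq> 0" using w_quad_1_nonzero Phi_eq_iff[of "w_quad 1" 0] by simp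
  show "whitt_gen mu zeta act (Phi (w_quad 1))"
    using a_nz assms
    by (intro whitt_gen_Phi;
        (simp add: w_quad_1 quad_defs casimir_atypical; auto simp: field_simps power2_eq_square algebra_simps))
qed

end

lemma (in rep) gen0_zero_subset: "gen0 S act {0} \<subseteq> {0}"
  unfolding gen0_def by (rule Inter_lower) (simp add: subspace_c_def)

lemma Mtilde_model_atypical_module:
  assumes M: "Mtilde_model lam zeta S act v0"
    and "zeta I2 I3 \<noteq> 0" "v0 \<noteq> 0" "atypical lam"
  shows "atypical_module S act v0 lam zeta"
proof -
  interpret induced_module S act v0 lam zeta
    using M assms(2,3) unfolding Mtilde_model_def
    by unfold_locales (simp_all add: rep_def)
  show ?thesis
    by unfold_locales (use atypical_casimir[OF assms(4)] in \<open>simp add: casimir_def\<close>)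
qed

theorem proposition22:
  fixes S :: "'v::cvs set" and act :: "idx \<Rightarrow> idx \<Rightarrow> 'v \<Rightarrow> 'v" and v0 v :: 'v
    and lam lamu alpha :: weight and zeta :: "idx \<Rightarrow> idx \<Rightarrow> complex"
  assumes Mt: "Mtilde_model lam zeta S act v0"
    and zI: "in_I zeta" and a_nz: "zeta I2 I3 \<noteq> 0"
    and atyp: "atypical lam"
    and lamu_orb: "lamu \<in> W_orbit_dot lam" and lamu_ad: "antidominant lamu"
    and alpha_pos: "alpha \<in> pos_odd_roots" and alpha_perp: "bform (lamu + rho) alpha = 0"
    and alpha_ad: "antidominant (lamu - alpha)"
    and vM: "v \<in> gen0 S act {v0}" and v_nz: "v \<noteq> 0"
    and v_wh: "act I2 I3 v = zeta I2 I3 *\<^sub>C v"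
  shows "let a = zeta I2 I3; c = chi0_z lam;
             v2 = act I2 I1 v;
             v4 = (2 * a) *\<^sub>C act I3 I1 v + act I2 I1 (H0 act v);
             w = (if c \<noteq> 1 then v2 + (1 / (2 * (1 - c))) *\<^sub>C v4 else v4);
             N = gen S act {w}
         in submodule S act N \<and> maximal_submodule S act N \<and>
            gen S act (insert v N) = S \<and>
            iso_Ltilde (lamu - alpha) zeta S act N"
proof -
  have "v0 \<noteq> 0"
    using vM v_nz rep.gen0_zero_subset[of S act] Mt by (auto simp: Mtilde_model_def rep_def)
  then interpret atypical_module S act v0 lam zeta
    using Mt a_nz atyp by (intro Mtilde_model_atypical_module)
  obtain \<sigma> where "\<sigma> \<noteq> 0" and v: "v = \<sigma> *\<^sub>C v0"
    using vM v_nz v_wh by (rule whittaker_in_gen0)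
  obtain B where "B \<noteq> 0" and w: "(if chi0_z lam \<noteq> 1
      then act I2 I1 v + (1 / (2 * (1 - chi0_z lam))) *\<^sub>C ((2 * aa) *\<^sub>C act I3 I1 v + act I2 I1 (H0 act v))
      else (2 * aa) *\<^sub>C act I3 I1 v + act I2 I1 (H0 act v)) = Phi (quad_scale B (w_quad 1))"
    using w_coordinates[OF \<open>\<sigma> \<noteq> 0\<close> v] .
  have "iso_Ltilde (lamu - alpha) zeta S act (Phi ` N_quads)"
    using lowered_weight[OF lamu_orb alpha_pos alpha_perp] by (intro iso_Ltilde_N) auto
  then show ?thesis
    unfolding Let_def w gen_w_quad[OF \<open>B \<noteq> 0\<close>]
    using submodule_N maximal_submodule_N gen_insert_generator[OF \<open>\<sigma> \<noteq> 0\<close>]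
    by (simp add: v image_subset_iff)
qed

end
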